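(* Let $G_\infty=(k^{\mathbb{Z}})^{I}$ be the set of all sequences $(\beta^{(1)},\beta^{(2)},\dots)$ with each $\beta^{(i)}=(\beta^{(i)}_n)_{n\in\mathbb{Z}}\in k^{\mathbb{Z}}$, $I=\{1,2,\dots\}$. Define $\Phi:G_\infty\to\mathrm{Aut}_*(H)$ by letting $\Phi(\beta^{(1)},\beta^{(2)},\dots)$ be the linear map $\phi$ with $\phi(x^n)=x^n$ and $\phi(x^ny^m)=\phi^{(1)}_{\beta^{(1)}}\circ\phi^{(2)}_{\beta^{(2)}}\circ\cdots\circ\phi^{(m)}_{\beta^{(m)}}(x^ny^m)$ for $n\in\mathbb{Z}$, $m\geq1$. Then $\Phi$ is a well-defined bijection from $G_\infty$ onto $\mathrm{Aut}_*(H)$; consequently, equipping $G_\infty$ with the group structure transported along $\Phi$, there is a group isomorphism $\mathrm{Aut}_*(H)\cong G_\infty$.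
   Context: Let $k$ be a field and $0\neq q\in k$ not a root of unity. Let $H=k_q[x,x^{-1},y]$ be the $k$-algebra generated by $x,x^{-1},y$ subject to $xx^{-1}=x^{-1}x=1$, $yx=qxy$, a Hopf algebra with $\Delta(x)=x\otimes x$, $\Delta(y)=y\otimes x+1\otimes y$, $\varepsilon(x)=1$, $\varepsilon(y)=0$. The elements $x^ny^m$ ($n\in\mathbb{Z}$, $m\in\mathbb{N}$) form a $k$-basis. Notation: $(n)_q=1+q+\dots+q^{n-1}$, $(n)!_q=(n)_q\cdots(1)_q$, $\binom{m}{i}_q=\frac{(m)!_q}{(i)!_q(m-i)!_q}$; for $0<j\le m$, $(m,j)_q=\prod_{i=0}^{j-1}(m-i)_q$, and $(m,0)_q=1$; for $1\le s\le m$ and $1\le i\le m/s$, $\binom{m}{s}_{q,i}=\prod_{j=0}^{i-1}\binom{m-js}{s}_q$. For $\beta\in k^{\mathbb{Z}}$: $\beta_{n,0}=1$, $\beta_{n,j}=\prod_{i=0}^{j-1}\beta_{n+i}$; $\beta_{n,s;0}=1$, $\beta_{n,s;j}=\prod_{i=0}^{j-1}\beta_{n+is}$. For $\beta\in k^{\mathbb{Z}}$ let $\phi^{(1)}_\beta$ be the linear map $H\to H$ with $\phi^{(1)}_\beta(x^ny^m)=x^ny^m+\sum_{l=0}^{m-1}(m,m-l)_q\big(\beta_{n,m-l}x^{n+m-l}-\beta_{n,m-l-1}\beta_{n+m-1}x^{n+m-l-1}\big)y^l$. For $s\geq2$ let $\phi^{(s)}_\beta$ be the linear map with $\phi^{(s)}_\beta(x^ny^m)=x^ny^m$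 if $0\le m<s$ and, for $m\geq s$, $\phi^{(s)}_\beta(x^ny^m)=x^ny^m+\sum_{1\le i\le\lfloor m/s\rfloor}\binom{m}{s}_{q,i}\big(\beta_{n,s;i}x^{n+is}-\beta_{n,s;i-1}\beta_{n+m-s}x^{n+is-s}\big)y^{m-is}$. $\mathrm{Aut}_*(H)$ is the group (under composition) of coalgebra automorphisms $\phi$ of $H$ with $\phi(x^n)=x^n$ for all $n$ and such that for each $n\in\mathbb{Z}$ there is $\beta_n\in k$ with $\phi(x^ny)=x^ny+\beta_n(x^{n+1}-x^n)$. *)

theory Defs
  imports Main "HOL-Library.Function_Algebras"
begin

text \<open>Elements of H = k_q[x,x^-1,y] are finitely supported coefficient functions
  on the basis x^n y^m, indexed by (n,m) :: int \<times> nat.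
  Elements of H \<otimes> H are finitely supported functions on pairs of basis indices.\<close>

type_synonym 'k hvec = "int \<times> nat \<Rightarrow> 'k"
type_synonym 'k tvec = "(int \<times> nat) \<times> (int \<times> nat) \<Rightarrow> 'k"

definition smult :: "'k::times \<Rightarrow> ('a \<Rightarrow> 'k) \<Rightarrow> ('a \<Rightarrow> 'k)" where
  "smult a v = (\<lambda>c. a * v c)"

definition hsupp :: "('a \<Rightarrow> 'k::zero) \<Rightarrow> 'a set" where
  "hsupp v = {b. v b \<noteq> 0}"

definition Hsp :: "('k::zero) hvec set" where
  "Hsp = {v. finite (hsupp v)}"

definition bas :: "int \<Rightarrow> nat \<Rightarrow> ('k::{zero,one}) hvec" where
  "bas n m = (\<lambda>c. if c = (n, m) then 1 else 0)"

text \<open>A linear map H \<rightarrow> H is given by its values on the basis; ext is its linear extension.\<close>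
definition ext :: "(int \<Rightarrow> nat \<Rightarrow> ('k::comm_ring_1) hvec) \<Rightarrow> 'k hvec \<Rightarrow> 'k hvec" where
  "ext \<phi> v = (\<lambda>c. \<Sum>b\<in>hsupp v. v b * \<phi> (fst b) (snd b) c)"

definition qint :: "'k::field \<Rightarrow> nat \<Rightarrow> 'k" where
  "qint q n = (\<Sum>i<n. q ^ i)"
definition qfact :: "'k::field \<Rightarrow> nat \<Rightarrow> 'k" where
  "qfact q n = (\<Prod>i\<in>{1..n}. qint q i)"
definition qbinom :: "'k::field \<Rightarrow> nat \<Rightarrow> nat \<Rightarrow> 'k" where
  "qbinom q m i = qfact q m / (qfact q i * qfact q (m - i))"
definition qfall :: "'k::field \<Rightarrow> nat \<Rightarrow> nat \<Rightarrow> 'k" where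
  "qfall q m j = (\<Prod>i<j. qint q (m - i))"
definition qbinom_iter :: "'k::field \<Rightarrow> nat \<Rightarrow> nat \<Rightarrow> nat \<Rightarrow> 'k" where
  "qbinom_iter q m s i = (\<Prod>j<i. qbinom q (m - j * s) s)"

definition bprod :: "(int \<Rightarrow> 'k::comm_ring_1) \<Rightarrow> int \<Rightarrow> nat \<Rightarrow> 'k" where
  "bprod \<beta> n j = (\<Prod>i<j. \<beta> (n + int i))"
definition bprods :: "(int \<Rightarrow> 'k::comm_ring_1) \<Rightarrow> int \<Rightarrow> nat \<Rightarrow> nat \<Rightarrow> 'k" where
  "bprods \<beta> n s j = (\<Prod>i<j. \<beta> (n + int i * int s))"

definition phi1 :: "'k::field \<Rightarrow> (int \<Rightarrow> 'k) \<Rightarrow> int \<Rightarrow> nat \<Rightarrow> 'k hvec" where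
  "phi1 q \<beta> n m = bas n m +
     (\<Sum>l<m. smult (qfall q m (m - l))
        (smult (bprod \<beta> n (m - l)) (bas (n + int m - int l) l)
         - smult (bprod \<beta> n (m - l - 1) * \<beta> (n + int m - 1)) (bas (n + int m - int l - 1) l)))"

definition phis :: "'k::field \<Rightarrow> nat \<Rightarrow> (int \<Rightarrow> 'k) \<Rightarrow> int \<Rightarrow> nat \<Rightarrow> 'k hvec" where
  "phis q s \<beta> n m = (if m < s then bas n m else bas n m +
     (\<Sum>i\<in>{1..m div s}. smult (qbinom_iter q m s i)
        (smult (bprods \<beta> n s i) (bas (n + int (i * s)) (m - i * s))
         - smult (bprods \<beta> n s (i - 1) * \<beta> (n + int m - int s))
                 (bas (n + int (i * s) - int s) (m - i * s)))))"

definition phi :: "'k::field \<Rightarrow> nat \<Rightarrow> (int \<Rightarrow> 'k) \<Rightarrow> int \<Rightarrow> nat \<Rightarrow> 'k hvec" where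
  "phi q s \<beta> = (if s = 1 then phi1 q \<beta> else phis q s \<beta>)"

text \<open>PhiChain q beta j v = phi^(1) o ... o phi^(j) applied to v (phi^(j) applied first)\<close>
primrec PhiChain :: "'k::field \<Rightarrow> (nat \<Rightarrow> int \<Rightarrow> 'k) \<Rightarrow> nat \<Rightarrow> 'k hvec \<Rightarrow> 'k hvec" where
  "PhiChain q \<beta> 0 v = v"
| "PhiChain q \<beta> (Suc j) v = PhiChain q \<beta> j (ext (phi q (Suc j) (\<beta> (Suc j))) v)"

text \<open>G_infinity: sequences beta^(1), beta^(2), ...; index 0 is unused and normalised to 0.\<close>
definition G_inf :: "(nat \<Rightarrow> int \<Rightarrow> 'k::zero) set" where
  "G_inf = {\<beta>. \<beta> 0 = (\<lambda>_. 0)}"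

definition PhiMap :: "'k::field \<Rightarrow> (nat \<Rightarrow> int \<Rightarrow> 'k) \<Rightarrow> int \<Rightarrow> nat \<Rightarrow> 'k hvec" where
  "PhiMap q \<beta> = (\<lambda>n m. if m = 0 then bas n 0 else PhiChain q \<beta> m (bas n m))"

text \<open>(x^a1 y^a2)(x^b1 y^b2) = q^(a2*b1) x^(a1+b1) y^(a2+b2), since y x = q x y.\<close>
definition midx :: "int \<times> nat \<Rightarrow> int \<times> nat \<Rightarrow> int \<times> nat" where
  "midx a b = (fst a + fst b, snd a + snd b)"
definition mcoef :: "'k::field \<Rightarrow> int \<times> nat \<Rightarrow> int \<times> nat \<Rightarrow> 'k" where
  "mcoef q a b = q powi (int (snd a) * fst b)"

definition tb :: "int \<times> nat \<Rightarrow> int \<times> nat \<Rightarrow> ('k::{zero,one}) tvec" where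
  "tb a b = (\<lambda>c. if c = (a, b) then 1 else 0)"

definition tmult :: "'k::field \<Rightarrow> 'k tvec \<Rightarrow> 'k tvec \<Rightarrow> 'k tvec" where
  "tmult q U V = (\<lambda>c. \<Sum>a\<in>hsupp U. \<Sum>b\<in>hsupp V.
      if midx (fst a) (fst b) = fst c \<and> midx (snd a) (snd b) = snd c
      then U a * V b * mcoef q (fst a) (fst b) * mcoef q (snd a) (snd b) else 0)"

primrec tpow :: "'k::field \<Rightarrow> 'k tvec \<Rightarrow> nat \<Rightarrow> 'k tvec" where
  "tpow q V 0 = tb (0, 0) (0, 0)"
| "tpow q V (Suc m) = tmult q (tpow q V m) V"

text \<open>Delta(x^n y^m) = Delta(x)^n Delta(y)^m = (x^n \<otimes> x^n)(y \<otimes> x + 1 \<otimes> y)^m\<close>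
definition Delta :: "'k::field \<Rightarrow> int \<Rightarrow> nat \<Rightarrow> 'k tvec" where
  "Delta q n m = tmult q (tb (n, 0) (n, 0)) (tpow q (tb (0, 1) (1, 0) + tb (0, 0) (0, 1)) m)"

definition Delta_ext :: "'k::field \<Rightarrow> 'k hvec \<Rightarrow> 'k tvec" where
  "Delta_ext q v = (\<Sum>b\<in>hsupp v. smult (v b) (Delta q (fst b) (snd b)))"

definition tens :: "('k::times) hvec \<Rightarrow> 'k hvec \<Rightarrow> 'k tvec" where
  "tens u v = (\<lambda>c. u (fst c) * v (snd c))"

definition tmap :: "(int \<Rightarrow> nat \<Rightarrow> ('k::comm_ring_1) hvec) \<Rightarrow> 'k tvec \<Rightarrow> 'k tvec" where
  "tmap \<phi> T = (\<Sum>c\<in>hsupp T.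
      smult (T c) (tens (\<phi> (fst (fst c)) (snd (fst c))) (\<phi> (fst (snd c)) (snd (snd c)))))"

definition epsb :: "int \<Rightarrow> nat \<Rightarrow> 'k::{zero,one}" where
  "epsb n m = (if m = 0 then 1 else 0)"
definition eps_ext :: "('k::comm_ring_1) hvec \<Rightarrow> 'k" where
  "eps_ext v = (\<Sum>b\<in>hsupp v. v b * epsb (fst b) (snd b))"

definition is_coalg_aut :: "'k::field \<Rightarrow> (int \<Rightarrow> nat \<Rightarrow> 'k hvec) \<Rightarrow> bool" where
  "is_coalg_aut q \<phi> \<longleftrightarrow>
     (\<forall>n m. \<phi> n m \<in> Hsp) \<and> bij_betw (ext \<phi>) Hsp Hsp \<and>
     (\<forall>n m. Delta_ext q (\<phi> n m) = tmap \<phi> (Delta q n m)) \<and>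
     (\<forall>n m. eps_ext (\<phi> n m) = epsb n m)"

definition Aut_star :: "'k::field \<Rightarrow> (int \<Rightarrow> nat \<Rightarrow> 'k hvec) set" where
  "Aut_star q = {\<phi>. is_coalg_aut q \<phi> \<and> (\<forall>n. \<phi> n 0 = bas n 0) \<and>
      (\<forall>n. \<exists>b. \<phi> n 1 = bas n 1 + smult b (bas (n + 1) 0 - bas n 0))}"

end

theory Submission
  imports Defs
begin

text \<open>Every map \<open>\<phi>\<^sup>(\<^sup>s\<^sup>)\<^sub>\<beta>\<close>, and hence \<open>\<Phi>(\<beta>)\<close>, sends \<open>x\<^sup>n y\<^sup>m\<close> to
  \<open>\<Sum> (m)!\<^sub>q / (l)!\<^sub>q \<cdot> R(n, a) \<cdot> S(a + l, n + m) \<cdot> x\<^sup>a y\<^sup>l\<close> for a pair of mutually inverse unitriangular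
  \<open>\<int> \<times> \<int>\<close>-matrices \<open>R\<close>, \<open>S\<close>; composition of such maps multiplies the matrices, and every such map
  is a unitriangular coalgebra automorphism preserving the counit. So \<open>\<Phi>\<close> lands in \<open>Aut\<^sub>*(H)\<close>.
  The coefficient of \<open>x\<^sup>n\<^sup>+\<^sup>m\<close> in \<open>\<Phi>(\<beta>)(x\<^sup>n y\<^sup>m)\<close> is \<open>\<beta>\<^sup>(\<^sup>m\<^sup>)\<^sub>n\<close> plus a term determined by
  \<open>\<beta>\<^sup>(\<^sup>1\<^sup>)\<close>, \dots, \<open>\<beta>\<^sup>(\<^sup>m\<^sup>-\<^sup>1\<^sup>)\<close>; this gives injectivity, and for \<open>\<psi> \<in> Aut\<^sub>*(H)\<close> it determines
  \<open>\<beta>\<close> recursively so that \<open>\<Phi>(\<beta>)\<close> and \<open>\<psi>\<close> have the same such coefficients. By induction on \<open>m\<close>,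
  \<open>\<psi>(x\<^sup>n y\<^sup>m) - \<Phi>(\<beta>)(x\<^sup>n y\<^sup>m)\<close> is then an \<open>(x\<^sup>n, x\<^sup>n\<^sup>+\<^sup>m)\<close>-skew-primitive element without
  \<open>x\<^sup>n\<^sup>+\<^sup>m\<close>-component, hence zero.\<close>

lemma sum_apply_fun: "(sum f A) x = sum (\<lambda>i. f i x) A"
  by (induction A rule: infinite_finite_induct) auto

lemma smult_apply [simp]: "smult a v c = a * v c"
  by (simp add: smult_def)

lemma hsupp_bas [simp]: "hsupp (bas n m :: ('k::zero_neq_one) hvec) = {(n, m)}"
  by (auto simp: hsupp_def bas_def)

lemma Hsp_subset: "finite A \<Longrightarrow> hsupp v \<subseteq> A \<Longrightarrow> v \<in> Hsp"
  by (simp add: Hsp_def finite_subset)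

lemma bas_Hsp [simp]: "(bas n m :: ('k::zero_neq_one) hvec) \<in> Hsp"
  by (simp add: Hsp_def)

lemma zero_Hsp [simp]: "(0 :: ('k::zero) hvec) \<in> Hsp"
  by (simp add: Hsp_def hsupp_def)

lemma Hsp_add [simp]: "u \<in> Hsp \<Longrightarrow> v \<in> Hsp \<Longrightarrow> (u + v :: ('k::monoid_add) hvec) \<in> Hsp"
  by (rule Hsp_subset[of "hsupp u \<union> hsupp v"]) (auto simp: Hsp_def hsupp_def)

lemma Hsp_diff [simp]: "u \<in> Hsp \<Longrightarrow> v \<in> Hsp \<Longrightarrow> (u - v :: ('k::group_add) hvec) \<in> Hsp"
  by (rule Hsp_subset[of "hsupp u \<union> hsupp v"]) (auto simp: Hsp_def hsupp_def)

lemma Hsp_degree_bounded: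
  assumes "w \<in> Hsp"
  obtains d where "\<And>b. b \<in> hsupp w \<Longrightarrow> snd b < d"
proof -
  have "finite (snd ` hsupp w)"
    using assms by (simp add: Hsp_def)
  then obtain d where "\<forall>x\<in>snd ` hsupp w. x < d"
    using finite_nat_set_iff_bounded by blast
  then show ?thesis
    using that by blast
qed

lemma sum_hsupp_superset:
  assumes "finite A" "hsupp v \<subseteq> A"
  shows "(\<Sum>b\<in>hsupp v. v b * f b) = (\<Sum>b\<in>A. v b * (f b :: 'k::semiring_0))"
  by (rule sum.mono_neutral_left) (use assms in \<open>auto simp: hsupp_def\<close>)

lemma ext_superset:
  assumes "finite A" "hsupp v \<subseteq> A"
  shows "ext \<phi> v c = (\<Sum>b\<in>A. v b * \<phi> (fst b) (snd b) c)"
  unfolding ext_def using sum_hsupp_superset[OF assms] by simp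

lemma ext_bas [simp]: "ext \<phi> (bas n m) = \<phi> n m"
  by (rule ext) (simp add: ext_def, simp add: bas_def)

lemma ext_bas_id:
  assumes "v \<in> Hsp"
  shows "ext bas v = v"
proof (rule ext)
  fix c
  have "ext bas v c = (\<Sum>b\<in>hsupp v. v b * (if c = b then 1 else 0))"
    by (simp add: ext_def bas_def prod_eq_iff eq_commute)
  also have "\<dots> = v c"
    using assms by (simp add: Hsp_def if_distrib hsupp_def cong: if_cong)
  finally show "ext bas v c = v c" .
qed

lemma hsupp_ext_subset:
  "hsupp (ext \<phi> v) \<subseteq> (\<Union>b\<in>hsupp v. hsupp (\<phi> (fst b) (snd b)))"
proof
  fix c
  assume "c \<in> hsupp (ext \<phi> v)"
  then have "(\<Sum>b\<in>hsupp v. v b * \<phi> (fst b) (snd b) c) \<noteq> 0"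
    by (simp add: hsupp_def ext_def)
  then obtain b where "b \<in> hsupp v" "v b * \<phi> (fst b) (snd b) c \<noteq> 0"
    by (meson sum.neutral)
  then show "c \<in> (\<Union>b\<in>hsupp v. hsupp (\<phi> (fst b) (snd b)))"
    by (intro UN_I[of b]) (auto simp: hsupp_def)
qed

lemma ext_Hsp:
  assumes "v \<in> Hsp" "\<And>n m. \<phi> n m \<in> Hsp"
  shows "ext \<phi> v \<in> Hsp"
  by (rule Hsp_subset[OF _ hsupp_ext_subset]) (use assms in \<open>auto simp: Hsp_def\<close>)

lemma ext_diff:
  assumes "u \<in> Hsp" "v \<in> Hsp"
  shows "ext \<phi> (u - v) = ext \<phi> u - ext \<phi> v"
proof (rule ext)
  fix c
  let ?A = "hsupp u \<union> hsupp v"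
  have A: "finite ?A"
    using assms by (simp add: Hsp_def)
  have "ext \<phi> (u - v) c = (\<Sum>b\<in>?A. (u - v) b * \<phi> (fst b) (snd b) c)"
    by (rule ext_superset[OF A]) (auto simp: hsupp_def)
  also have "\<dots> = ext \<phi> u c - ext \<phi> v c"
    using ext_superset[OF A, of u] ext_superset[OF A, of v]
    by (simp add: left_diff_distrib sum_subtractf)
  finally show "ext \<phi> (u - v) c = (ext \<phi> u - ext \<phi> v) c"
    by simp
qed

lemma ext_add:
  assumes "u \<in> Hsp" "v \<in> Hsp"
  shows "ext \<phi> (u + v) = ext \<phi> u + ext \<phi> v"
  using ext_diff[of "u + v" v \<phi>] assms by (simp add: eq_diff_eq)

lemma ext_comp:
  assumes v: "v \<in> Hsp" and g: "\<And>n m. g n m \<in> Hsp"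
  shows "ext f (ext g v) = ext (\<lambda>n m. ext f (g n m)) v"
proof (rule ext)
  fix c
  let ?A = "\<Union>x\<in>hsupp v. hsupp (g (fst x) (snd x))"
  have A: "finite ?A"
    using v g by (auto simp: Hsp_def)
  have "ext f (ext g v) c = (\<Sum>b\<in>?A. ext g v b * f (fst b) (snd b) c)"
    by (rule ext_superset[OF A hsupp_ext_subset])
  also have "\<dots> = (\<Sum>x\<in>hsupp v. v x * (\<Sum>b\<in>?A. g (fst x) (snd x) b * f (fst b) (snd b) c))"
    unfolding ext_def sum_distrib_right sum_distrib_left
    by (subst sum.swap) (simp add: mult.assoc)
  also have "\<dots> = (\<Sum>x\<in>hsupp v. v x * ext f (g (fst x) (snd x)) c)"
    by (intro sum.cong refl arg_cong2[where f = "(*)"] ext_superset[OF A, symmetric]) auto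
  also have "\<dots> = ext (\<lambda>n m. ext f (g n m)) v c"
    by (simp add: ext_def)
  finally show "ext f (ext g v) c = ext (\<lambda>n m. ext f (g n m)) v c" .
qed

section \<open>\<open>q\<close>-integers and \<open>q\<close>-binomial coefficients\<close>

lemma qint_0 [simp]: "qint q 0 = 0" and qint_1 [simp]: "qint q (Suc 0) = 1"
  by (simp_all add: qint_def)

lemma qint_Suc: "qint q (Suc n) = qint q n + q ^ n"
  by (simp add: qint_def)

lemma qint_add: "qint q (a + b) = qint q a + q ^ a * qint q b"
  by (induction b) (simp_all add: qint_Suc algebra_simps power_add)

lemma qint_times_q_minus_1: "qint q n * (q - 1) = q ^ n - 1"
  by (induction n) (simp_all add: qint_Suc algebra_simps)

lemma qfact_0 [simp]: "qfact q 0 = 1"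
  by (simp add: qfact_def)

lemma qfact_Suc: "qfact q (Suc n) = qfact q n * qint q (Suc n)"
  unfolding qfact_def by (simp add: atLeastAtMostSuc_conv mult.commute)

text \<open>The hypothesis that \<open>q\<close> is not a root of unity enters only through the non-vanishing
  of the \<open>q\<close>-integers.\<close>

locale qint_nonzero =
  fixes q :: "'k::field"
  assumes qint_nonzero: "0 < n \<Longrightarrow> qint q n \<noteq> 0"

lemma qint_nonzero_if_not_root_of_unity:
  fixes q :: "'k::field"
  assumes "\<forall>n::nat. 0 < n \<longrightarrow> q ^ n \<noteq> 1"
  shows "qint_nonzero q"
proof
  fix n :: nat
  assume "0 < n"
  then show "qint q n \<noteq> 0"
    using assms qint_times_q_minus_1[of q n] by auto
qed

context qint_nonzero
begin

lemma qfact_nonzero: "qfact q n \<noteq> 0"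
  by (induction n) (simp_all add: qfact_Suc qint_nonzero)

lemma qbinom_nonzero: "qbinom q m i \<noteq> 0"
  by (simp add: qbinom_def qfact_nonzero)

lemma qbinom_0 [simp]: "qbinom q m 0 = 1"
  by (simp add: qbinom_def qfact_nonzero)

lemma qbinom_self [simp]: "qbinom q m m = 1"
  by (simp add: qbinom_def qfact_nonzero)

lemma qbinom_pascal:
  assumes "j < m"
  shows "qbinom q (Suc m) (Suc j) = qbinom q m (Suc j) + q ^ (m - j) * qbinom q m j"
proof -
  define d where "d = m - Suc j"
  have d: "m = j + Suc d" "m - j = Suc d" "m - Suc j = d" "Suc m - Suc j = Suc d"
    using assms by (auto simp: d_def)
  have split: "qint q (Suc m) = qint q (Suc d) + q ^ Suc d * qint q (Suc j)"
    using qint_add[of q "Suc d" "Suc j"] d by (simp add: add.commute)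
  have nz: "qfact q d \<noteq> 0" "qfact q j \<noteq> 0" "qint q (Suc d) \<noteq> 0" "qint q (Suc j) \<noteq> 0"
    by (simp_all add: qfact_nonzero qint_nonzero)
  have frac: "F * (X + p * Y) / ((J * Y) * (D * X)) = F / ((J * Y) * D) + p * (F / (J * (D * X)))"
    if "J \<noteq> 0" "D \<noteq> 0" "X \<noteq> 0" "Y \<noteq> 0" for F J D X Y p :: 'k
    using that by (simp add: field_simps)
  show ?thesis
    unfolding qbinom_def d(2-4) qfact_Suc split
    using nz frac[of "qfact q j" "qfact q d" "qint q (Suc d)" "qint q (Suc j)" "qfact q m" "q ^ Suc d"]
    by (simp add: mult.assoc)
qed

lemma qbinom_Suc:
  assumes "j \<le> Suc m"
  shows "qbinom q (Suc m) j =
    (if 0 < j then q ^ (Suc m - j) * qbinom q m (j - 1) else 0) + (if j \<le> m then qbinom q m j else 0)"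
proof (cases j)
  case (Suc j')
  with assms show ?thesis
    by (cases "j' = m") (simp_all add: qbinom_pascal)
qed simp

lemma qfall_eq: "j \<le> m \<Longrightarrow> qfall q m j = qfact q m / qfact q (m - j)"
proof (induction j)
  case (Suc j)
  then have "qfact q (m - j) = qfact q (m - Suc j) * qint q (m - j)"
    by (metis Suc_diff_Suc Suc_le_lessD qfact_Suc)
  moreover have "qfact q (m - Suc j) \<noteq> 0" "qint q (m - j) \<noteq> 0"
    using Suc.prems by (simp_all add: qfact_nonzero qint_nonzero)
  ultimately show ?case
    using Suc by (simp add: qfall_def)
qed (simp add: qfall_def qfact_nonzero)

lemma qbinom_iter_eq:
  "i * s \<le> m \<Longrightarrow> qbinom_iter q m s i = qfact q m / (qfact q s ^ i * qfact q (m - i * s))"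
proof (induction i)
  case (Suc i)
  have "m - (i * s + s) = m - Suc i * s"
    by simp
  moreover have "i * s \<le> m"
    using Suc.prems by simp
  ultimately have "qbinom_iter q m s (Suc i) = qfact q m / (qfact q s ^ i * qfact q (m - i * s))
      * (qfact q (m - i * s) / (qfact q s * qfact q (m - Suc i * s)))"
    using Suc.IH by (simp add: qbinom_iter_def qbinom_def diff_diff_left del: mult_Suc)
  also have "\<dots> = qfact q m / (qfact q s ^ Suc i * qfact q (m - Suc i * s))"
    using qfact_nonzero[of s] qfact_nonzero[of "m - i * s"] qfact_nonzero[of "m - Suc i * s"]
    by (simp add: field_simps)
  finally show ?case .
qed (simp add: qbinom_iter_def qfact_nonzero)

end

section \<open>The comultiplication in coordinates\<close>

lemma sum_if_single:
  assumes "finite A"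
  shows "(\<Sum>i\<in>A. if i = k \<and> P then f i else 0) = (if k \<in> A \<and> P then f k else 0)"
  using assms by (cases P) (simp_all add: sum.delta')

lemma tmult_superset:
  assumes "finite A" "finite B" "hsupp U \<subseteq> A" "hsupp V \<subseteq> B"
  shows "tmult q U V c = (\<Sum>a\<in>A. \<Sum>b\<in>B.
    if midx (fst a) (fst b) = fst c \<and> midx (snd a) (snd b) = snd c
    then U a * V b * mcoef q (fst a) (fst b) * mcoef q (snd a) (snd b) else 0)"
proof -
  have "tmult q U V c = (\<Sum>a\<in>A. \<Sum>b\<in>hsupp V.
      if midx (fst a) (fst b) = fst c \<and> midx (snd a) (snd b) = snd c
      then U a * V b * mcoef q (fst a) (fst b) * mcoef q (snd a) (snd b) else 0)"
    unfolding tmult_def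
    by (rule sum.mono_neutral_left)
      (use assms in \<open>auto simp: hsupp_def intro!: sum.neutral, metis mult_zero_left\<close>)
  also have "\<dots> = (\<Sum>a\<in>A. \<Sum>b\<in>B.
      if midx (fst a) (fst b) = fst c \<and> midx (snd a) (snd b) = snd c
      then U a * V b * mcoef q (fst a) (fst b) * mcoef q (snd a) (snd b) else 0)"
    by (intro sum.cong refl sum.mono_neutral_left) (use assms in \<open>auto simp: hsupp_def\<close>)
  finally show ?thesis .
qed

definition Delta_y :: "'k::{monoid_add,one} tvec" where
  "Delta_y = tb (0, 1) (1, 0) + tb (0, 0) (0, 1)"

context qint_nonzero
begin

text \<open>The \<open>q\<close>-binomial theorem for \<open>\<Delta>(y)\<^sup>m = (y \<otimes> x + 1 \<otimes> y)\<^sup>m\<close>, which holds because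
  \<open>(1 \<otimes> y)(y \<otimes> x) = q (y \<otimes> x)(1 \<otimes> y)\<close>.\<close>

lemma tpow_Delta_y_coeff:
  "tpow q Delta_y m ((a, j), (b, l)) =
    (if a = 0 \<and> j + l = m \<and> b = int j then qbinom q m j else 0)"
proof (induction m arbitrary: a j b l)
  case 0
  then show ?case
    by (auto simp: tb_def)
next
  case (Suc m)
  let ?V = "Delta_y :: 'k tvec"
  let ?P = "tpow q ?V m"
  let ?g = "\<lambda>i::nat. ((0::int, i), (int i, m - i))"
  have supp_P: "hsupp ?P \<subseteq> ?g ` {..m}"
  proof (rule subsetI, clarify)
    fix a j b l
    assume "((a, j), b, l) \<in> hsupp ?P"
    then have "?P ((a, j), b, l) \<noteq> 0"
      unfolding hsupp_def by (rule CollectD)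
    then have "a = 0 \<and> j + l = m \<and> b = int j"
      unfolding Suc.IH by (auto split: if_splits)
    then show "((a, j), b, l) \<in> ?g ` {..m}"
      by force
  qed
  have supp_V: "hsupp ?V \<subseteq> {((0, 1), (1, 0)), ((0, 0), (0, 1))}"
    by (auto simp: Delta_y_def hsupp_def tb_def split: if_splits)
  have V: "?V ((0, 1), (1, 0)) = 1" "?V ((0, 0), (0, 1)) = 1"
    by (simp_all add: Delta_y_def tb_def)
  have "tpow q ?V (Suc m) ((a, j), (b, l)) = (\<Sum>x\<in>?g ` {..m}. \<Sum>y\<in>{((0, 1), (1, 0)), ((0, 0), (0, 1))}.
      if midx (fst x) (fst y) = (a, j) \<and> midx (snd x) (snd y) = (b, l)
      then ?P x * ?V y * mcoef q (fst x) (fst y) * mcoef q (snd x) (snd y) else 0)"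
    unfolding tpow.simps by (subst tmult_superset[OF _ _ supp_P supp_V]) auto
  also have "\<dots> = (\<Sum>i\<le>m.
      (if (0, Suc i) = (a, j) \<and> (int i + 1, m - i) = (b, l) then qbinom q m i * q ^ (m - i) else 0)
      + (if (0, i) = (a, j) \<and> (int i, Suc (m - i)) = (b, l) then qbinom q m i else 0))"
    using V by (subst sum.reindex) (auto simp: inj_on_def Suc.IH midx_def mcoef_def intro!: sum.cong)
  also have "\<dots> = (\<Sum>i\<le>m. if i = j - 1 \<and> (a = 0 \<and> 0 < j \<and> b = int j \<and> l = m - (j - 1))
        then q ^ (m - i) * qbinom q m i else 0)
      + (\<Sum>i\<le>m. if i = j \<and> (a = 0 \<and> b = int j \<and> l = Suc (m - j)) then qbinom q m i else 0)"
    unfolding sum.distrib by (intro arg_cong2[where f = "(+)"] sum.cong refl) auto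
  also have "\<dots> = (if a = 0 \<and> j + l = Suc m \<and> b = int j then qbinom q (Suc m) j else 0)"
    by (simp only: sum_if_single finite_atMost atMost_iff)
      (auto simp: qbinom_Suc Suc_diff_le)
  finally show ?case .
qed

lemma Delta_coeff:
  "Delta q n m ((a, j), (b, l)) = (if a = n \<and> j + l = m \<and> b = n + int j then qbinom q m j else 0)"
proof -
  let ?P = "tpow q Delta_y m"
  let ?g = "\<lambda>i::nat. ((0::int, i), (int i, m - i))"
  have supp_P: "hsupp ?P \<subseteq> ?g ` {..m}"
    by (rule subsetI, clarify) (force simp: hsupp_def tpow_Delta_y_coeff split: if_splits)
  have supp_x: "hsupp (tb (n, 0) (n, 0) :: 'k tvec) \<subseteq> {((n, 0), (n, 0))}"
    by (auto simp: hsupp_def tb_def split: if_splits)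
  have "Delta q n m ((a, j), (b, l)) = (\<Sum>x\<in>{((n, 0), (n, 0))}. \<Sum>y\<in>?g ` {..m}.
      if midx (fst x) (fst y) = (a, j) \<and> midx (snd x) (snd y) = (b, l)
      then tb (n, 0) (n, 0) x * ?P y * mcoef q (fst x) (fst y) * mcoef q (snd x) (snd y) else 0)"
    unfolding Delta_def Delta_y_def[symmetric] by (subst tmult_superset[OF _ _ supp_x supp_P]) auto
  also have "\<dots> = (\<Sum>i\<le>m. if i = j \<and> (a = n \<and> b = n + int j \<and> l = m - j) then qbinom q m i else 0)"
    by (subst sum.reindex)
      (auto simp: inj_on_def tpow_Delta_y_coeff midx_def mcoef_def tb_def intro!: sum.cong)
  also have "\<dots> = (if a = n \<and> j + l = m \<and> b = n + int j then qbinom q m j else 0)"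
    by (subst sum_if_single) auto
  finally show ?thesis .
qed

lemma Delta_ext_coeff:
  assumes "v \<in> Hsp"
  shows "Delta_ext q v ((a, j), (b, l)) = (if b = a + int j then v (a, j + l) * qbinom q (j + l) j else 0)"
proof -
  have "Delta_ext q v ((a, j), (b, l)) = (\<Sum>x\<in>hsupp v. v x * Delta q (fst x) (snd x) ((a, j), (b, l)))"
    by (simp add: Delta_ext_def sum_apply_fun)
  also have "\<dots> = (\<Sum>x\<in>hsupp v. if x = (a, j + l) \<and> b = a + int j then v x * qbinom q (j + l) j else 0)"
    by (intro sum.cong refl) (auto simp: Delta_coeff)
  also have "\<dots> = (if b = a + int j then v (a, j + l) * qbinom q (j + l) j else 0)"
    using assms by (cases "(a, j + l) \<in> hsupp v") (auto simp: Hsp_def hsupp_def sum.delta')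
  finally show ?thesis .
qed

lemma Delta_ext_diff:
  assumes "u \<in> Hsp" "v \<in> Hsp"
  shows "Delta_ext q (u - v) = Delta_ext q u - Delta_ext q v"
proof (rule ext, clarify)
  fix a j b l
  show "Delta_ext q (u - v) ((a, j), b, l) = (Delta_ext q u - Delta_ext q v) ((a, j), b, l)"
    using assms by (simp add: Delta_ext_coeff left_diff_distrib)
qed

lemma tmap_Delta_coeff:
  "tmap \<phi> (Delta q n m) c = (\<Sum>i\<le>m. qbinom q m i * \<phi> n i (fst c) * \<phi> (n + int i) (m - i) (snd c))"
proof -
  let ?g = "\<lambda>i::nat. ((n, i), (n + int i, m - i))"
  have supp: "hsupp (Delta q n m) \<subseteq> ?g ` {..m}"
    by (rule subsetI, clarify) (force simp: hsupp_def Delta_coeff split: if_splits)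
  have "tmap \<phi> (Delta q n m) c = (\<Sum>x\<in>hsupp (Delta q n m). Delta q n m x *
      (\<phi> (fst (fst x)) (snd (fst x)) (fst c) * \<phi> (fst (snd x)) (snd (snd x)) (snd c)))"
    by (simp add: tmap_def sum_apply_fun tens_def)
  also have "\<dots> = (\<Sum>x\<in>?g ` {..m}. Delta q n m x *
      (\<phi> (fst (fst x)) (snd (fst x)) (fst c) * \<phi> (fst (snd x)) (snd (snd x)) (snd c)))"
    by (rule sum.mono_neutral_left) (use supp in \<open>auto simp: hsupp_def\<close>)
  also have "\<dots> = (\<Sum>i\<le>m. qbinom q m i * \<phi> n i (fst c) * \<phi> (n + int i) (m - i) (snd c))"
    by (subst sum.reindex) (auto simp: inj_on_def Delta_coeff mult.assoc intro!: sum.cong)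
  finally show ?thesis .
qed

lemma tmap_Delta_diff:
  assumes "0 < m"
    and agree: "\<And>i n'. 0 < i \<Longrightarrow> i < m \<Longrightarrow> \<psi> n' i = \<phi> n' i"
    and "\<And>n'. \<psi> n' 0 = bas n' 0" "\<And>n'. \<phi> n' 0 = bas n' 0"
  shows "tmap \<psi> (Delta q n m) - tmap \<phi> (Delta q n m) =
    tens (bas n 0) (\<psi> n m - \<phi> n m) + tens (\<psi> n m - \<phi> n m) (bas (n + int m) 0)"
proof (rule ext)
  fix c :: "(int \<times> nat) \<times> (int \<times> nat)"
  define t where "t = (\<lambda>\<chi> i. qbinom q m i * \<chi> n i (fst c) * \<chi> (n + int i) (m - i) (snd c))"
  have ends: "{..m} = insert 0 (insert m {0<..<m})"
    using \<open>0 < m\<close> by auto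
  have "(\<Sum>i\<in>{0<..<m}. t \<psi> i) = (\<Sum>i\<in>{0<..<m}. t \<phi> i)"
    by (intro sum.cong refl) (simp add: t_def agree)
  then show "(tmap \<psi> (Delta q n m) - tmap \<phi> (Delta q n m)) c =
      (tens (bas n 0) (\<psi> n m - \<phi> n m) + tens (\<psi> n m - \<phi> n m) (bas (n + int m) 0)) c"
    using \<open>0 < m\<close> assms(3,4)
    by (simp add: tmap_Delta_coeff t_def[symmetric] ends tens_def algebra_simps)
      (simp add: t_def tens_def algebra_simps)
qed

end

section \<open>Upper triangular matrices indexed by the integers\<close>

text \<open>Only entries on or above the diagonal enter the product, so \<open>tri_mult\<close> is the product of
  upper triangular \<open>\<int> \<times> \<int>\<close> matrices.\<close>

definition kron :: "int \<Rightarrow> int \<Rightarrow> 'k::{zero,one}" where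
  "kron i j = (if i = j then 1 else 0)"

definition tri_mult :: "(int \<Rightarrow> int \<Rightarrow> 'k::comm_ring_1) \<Rightarrow> (int \<Rightarrow> int \<Rightarrow> 'k) \<Rightarrow> int \<Rightarrow> int \<Rightarrow> 'k" where
  "tri_mult A B i j = (\<Sum>k\<in>{i..j}. A i k * B k j)"

lemma tri_mult_assoc: "tri_mult (tri_mult A B) C i j = tri_mult A (tri_mult B C) i j"
proof -
  have "tri_mult (tri_mult A B) C i j = (\<Sum>k\<in>{i..j}. \<Sum>u\<in>{u\<in>{i..j}. u \<le> k}. A i u * B u k * C k j)"
    unfolding tri_mult_def sum_distrib_right by (intro sum.cong refl) (auto intro!: sum.cong)
  also have "\<dots> = (\<Sum>u\<in>{i..j}. \<Sum>k\<in>{k\<in>{i..j}. u \<le> k}. A i u * B u k * C k j)"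
    by (rule sum.swap_restrict) auto
  also have "\<dots> = tri_mult A (tri_mult B C) i j"
    unfolding tri_mult_def sum_distrib_left
    by (intro sum.cong refl) (auto simp: mult.assoc intro!: sum.cong)
  finally show ?thesis .
qed

lemma tri_mult_cong:
  assumes "\<And>k. i \<le> k \<Longrightarrow> k \<le> j \<Longrightarrow> A i k = A' i k" "\<And>k. i \<le> k \<Longrightarrow> k \<le> j \<Longrightarrow> B k j = B' k j"
  shows "tri_mult A B i j = tri_mult A' B' i j"
  unfolding tri_mult_def using assms by (intro sum.cong) auto

lemma tri_mult_kron_left:
  assumes "i \<le> j"
  shows "tri_mult kron C i j = C i j"
proof -
  have "tri_mult kron C i j = (\<Sum>k\<in>{i..j}. if i = k then C k j else 0)"
    unfolding tri_mult_def by (intro sum.cong) (auto simp: kron_def)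
  then show ?thesis
    using assms by (simp add: sum.delta)
qed

lemma tri_mult_diag: "tri_mult A B i i = A i i * B i i"
  by (simp add: tri_mult_def)

lemma tri_mult_below_diag: "j < i \<Longrightarrow> tri_mult A B i j = 0"
  by (simp add: tri_mult_def)

lemma tri_mult_inverse_mult:
  assumes "\<And>i j. i \<le> j \<Longrightarrow> tri_mult S2 R2 i j = kron i j"
    and "\<And>i j. i \<le> j \<Longrightarrow> tri_mult S1 R1 i j = kron i j"
    and "i \<le> j"
  shows "tri_mult (tri_mult S1 S2) (tri_mult R2 R1) i j = kron i j"
proof -
  have "tri_mult (tri_mult S1 S2) (tri_mult R2 R1) i j = tri_mult S1 (tri_mult S2 (tri_mult R2 R1)) i j"
    by (rule tri_mult_assoc)
  also have "\<dots> = tri_mult S1 R1 i j"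
  proof (rule tri_mult_cong)
    fix k
    assume "i \<le> k" "k \<le> j"
    have "tri_mult S2 (tri_mult R2 R1) k j = tri_mult (tri_mult S2 R2) R1 k j"
      by (rule tri_mult_assoc[symmetric])
    also have "\<dots> = tri_mult kron R1 k j"
      by (rule tri_mult_cong) (simp_all add: assms(1))
    also have "\<dots> = R1 k j"
      using \<open>k \<le> j\<close> by (rule tri_mult_kron_left)
    finally show "tri_mult S2 (tri_mult R2 R1) k j = R1 k j" .
  qed simp
  also have "\<dots> = kron i j"
    using assms(2,3) by simp
  finally show ?thesis .
qed

lemma sum_two_points:
  assumes "finite A" "p1 \<noteq> p2" "\<And>u. u \<in> A \<Longrightarrow> u \<noteq> p1 \<Longrightarrow> u \<noteq> p2 \<Longrightarrow> f u = 0"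
  shows "sum f A = (if p1 \<in> A then f p1 else 0) + (if p2 \<in> A then f p2 else (0::'a::comm_monoid_add))"
proof -
  have "sum f A = sum f (A \<inter> {p1, p2})"
    by (rule sum.mono_neutral_right) (use assms in auto)
  also have "\<dots> = (if p1 \<in> A then f p1 else 0) + (if p2 \<in> A then f p2 else 0)"
    using assms(2) by (cases "p1 \<in> A"; cases "p2 \<in> A") (auto simp: insert_commute Int_insert_right)
  finally show ?thesis .
qed

lemma sum_shift_int: "(\<Sum>l\<le>m. h (a + int l)) = (\<Sum>c\<in>{a..a + int m}. h c)"
proof -
  have inj: "inj_on (\<lambda>l. a + int l) {..m}"
    by (auto simp: inj_on_def)
  have "(\<lambda>l. a + int l) ` {..m} = {a..a + int m}"
  proof
    show "{a..a + int m} \<subseteq> (\<lambda>l. a + int l) ` {..m}"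
    proof
      fix c
      assume "c \<in> {a..a + int m}"
      then show "c \<in> (\<lambda>l. a + int l) ` {..m}"
        by (intro image_eqI[of _ _ "nat (c - a)"]) auto
    qed
  qed auto
  then show ?thesis
    using sum.reindex[OF inj, of h] by simp
qed

lemma sum_if_mem_subset:
  assumes "finite A" "B \<subseteq> A"
  shows "(\<Sum>x\<in>A. if x \<in> B then f x else 0) = (\<Sum>x\<in>B. f x)"
  using sum.inter_restrict[OF assms(1), of f B] assms(2) by (simp add: Int_absorb1)

definition tri_map :: "'k::field \<Rightarrow> (int \<Rightarrow> int \<Rightarrow> 'k) \<Rightarrow> (int \<Rightarrow> int \<Rightarrow> 'k) \<Rightarrow> int \<Rightarrow> nat \<Rightarrow> 'k hvec" where
  "tri_map q R S n m = (\<lambda>c. if n \<le> fst c \<and> fst c + int (snd c) \<le> n + int m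
     then qfact q m / qfact q (snd c) * R n (fst c) * S (fst c + int (snd c)) (n + int m) else 0)"

lemma hsupp_tri_map: "hsupp (tri_map q R S n m) \<subseteq> {n..n + int m} \<times> {..m}"
  by (auto simp: tri_map_def hsupp_def split: if_splits)

lemma tri_map_Hsp: "tri_map q R S n m \<in> Hsp"
  by (rule Hsp_subset[OF _ hsupp_tri_map]) simp

lemma tri_map_above_degree: "m < l \<Longrightarrow> tri_map q R S n m (a, l) = 0"
  by (auto simp: tri_map_def)

context qint_nonzero
begin

lemma tri_map_kron: "tri_map q kron kron = bas"
  by (auto simp: fun_eq_iff tri_map_def kron_def bas_def qfact_nonzero)

lemma tri_map_top_degree: "tri_map q R S n m (a, m) = (if a = n then R n n * S (n + int m) (n + int m) else 0)"
  by (auto simp: tri_map_def qfact_nonzero)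

lemma ext_tri_map:
  "ext (tri_map q R1 S1) (tri_map q R2 S2 n m) = tri_map q (tri_mult R2 R1) (tri_mult S1 S2) n m"
proof (rule ext, clarify)
  fix a' :: int and l' :: nat
  define K where "K = qfact q m / qfact q l'"
  define Y where "Y = tri_mult S1 S2 (a' + int l') (n + int m)"
  define H where "H = (\<lambda>a c. if n \<le> a \<and> a \<le> a' \<and> a' + int l' \<le> c \<and> c \<le> n + int m
      then K * (R2 n a * R1 a a') * (S1 (a' + int l') c * S2 c (n + int m)) else 0)"
  have "ext (tri_map q R1 S1) (tri_map q R2 S2 n m) (a', l')
      = (\<Sum>b\<in>{n..n + int m} \<times> {..m}. tri_map q R2 S2 n m b * tri_map q R1 S1 (fst b) (snd b) (a', l'))"
    by (rule ext_superset[OF _ hsupp_tri_map]) simp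
  also have "\<dots> = (\<Sum>a\<in>{n..n + int m}. \<Sum>l\<le>m. tri_map q R2 S2 n m (a, l) * tri_map q R1 S1 a l (a', l'))"
    by (simp add: sum.cartesian_product split_beta)
  also have "\<dots> = (\<Sum>a\<in>{n..n + int m}. \<Sum>l\<le>m. H a (a + int l))"
    by (intro sum.cong refl) (auto simp: tri_map_def H_def K_def qfact_nonzero)
  also have "\<dots> = (\<Sum>a\<in>{n..n + int m}. \<Sum>c\<in>{a..a + int m}. H a c)"
    by (simp add: sum_shift_int)
  also have "\<dots> = (\<Sum>a\<in>{n..n + int m}. if a \<le> a' then K * (R2 n a * R1 a a') * Y else 0)"
  proof (intro sum.cong refl)
    fix a
    assume a: "a \<in> {n..n + int m}"
    show "(\<Sum>c\<in>{a..a + int m}. H a c) = (if a \<le> a' then K * (R2 n a * R1 a a') * Y else 0)"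
    proof (cases "a \<le> a'")
      case True
      have "(\<Sum>c\<in>{a..a + int m}. H a c) = (\<Sum>c\<in>{a..a + int m}. if c \<in> {a' + int l'..n + int m} then
          K * (R2 n a * R1 a a') * (S1 (a' + int l') c * S2 c (n + int m)) else 0)"
        using a True by (intro sum.cong refl) (auto simp: H_def)
      also have "\<dots> = K * (R2 n a * R1 a a') * Y"
        using a True by (subst sum_if_mem_subset) (auto simp: Y_def tri_mult_def sum_distrib_left)
      finally show ?thesis
        using True by simp
    qed (simp add: H_def)
  qed
  also have "\<dots> = K * tri_mult R2 R1 n a' * Y"
  proof (cases "a' \<le> n + int m")
    case True
    have "(\<Sum>a\<in>{n..n + int m}. if a \<le> a' then K * (R2 n a * R1 a a') * Y else 0)
        = (\<Sum>a\<in>{n..n + int m}. if a \<in> {n..a'} then K * (R2 n a * R1 a a') * Y else 0)"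
      by (intro sum.cong refl) auto
    also have "\<dots> = K * tri_mult R2 R1 n a' * Y"
      using True by (subst sum_if_mem_subset) (auto simp: tri_mult_def sum_distrib_left sum_distrib_right mult.assoc)
    finally show ?thesis .
  next
    case False
    then have "Y = 0"
      by (simp add: Y_def tri_mult_below_diag)
    then show ?thesis
      by (simp only: mult_zero_right if_cancel sum.neutral_const)
  qed
  also have "\<dots> = tri_map q (tri_mult R2 R1) (tri_mult S1 S2) n m (a', l')"
    by (auto simp: tri_map_def K_def Y_def tri_mult_below_diag)
  finally show "ext (tri_map q R1 S1) (tri_map q R2 S2 n m) (a', l') =
      tri_map q (tri_mult R2 R1) (tri_mult S1 S2) n m (a', l')" .
qed

lemma tmap_tri_map_Delta_coeff:
  "tmap (tri_map q R S) (Delta q n m) ((a, j), (b, l)) = (if n \<le> a \<and> b + int l \<le> n + int m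
    then qfact q m / (qfact q j * qfact q l) * (R n a * S (b + int l) (n + int m)) * tri_mult S R (a + int j) b
    else 0)"
proof -
  define K where "K = qfact q m / (qfact q j * qfact q l)"
  define F where "F = (\<lambda>k. K * (R n a * S (b + int l) (n + int m)) * (S (a + int j) k * R k b))"
  define T where "T = (\<lambda>k. if n \<le> a \<and> a + int j \<le> k \<and> k \<le> b \<and> b + int l \<le> n + int m then F k else 0)"
  have "tmap (tri_map q R S) (Delta q n m) ((a, j), (b, l)) =
      (\<Sum>i\<le>m. qbinom q m i * tri_map q R S n i (a, j) * tri_map q R S (n + int i) (m - i) (b, l))"
    by (simp add: tmap_Delta_coeff)
  also have "\<dots> = (\<Sum>i\<le>m. T (n + int i))"
  proof (intro sum.cong refl)
    fix i
    assume "i \<in> {..m}"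
    then have im: "n + int i + int (m - i) = n + int m"
      by simp
    have K: "qbinom q m i * (qfact q i / qfact q j) * (qfact q (m - i) / qfact q l) = K"
      by (simp add: qbinom_def K_def qfact_nonzero field_simps)
    show "qbinom q m i * tri_map q R S n i (a, j) * tri_map q R S (n + int i) (m - i) (b, l) = T (n + int i)"
    proof (cases "n \<le> a \<and> a + int j \<le> n + int i \<and> n + int i \<le> b \<and> b + int l \<le> n + int m")
      case True
      have "qbinom q m i * tri_map q R S n i (a, j) * tri_map q R S (n + int i) (m - i) (b, l)
        = qbinom q m i * (qfact q i / qfact q j * R n a * S (a + int j) (n + int i)) *
          (qfact q (m - i) / qfact q l * R (n + int i) b * S (b + int l) (n + int m))"
        using True by (simp add: tri_map_def im)
      also have "\<dots> = K * (R n a * S (b + int l) (n + int m)) * (S (a + int j) (n + int i) * R (n + int i) b)"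
        unfolding K[symmetric] by (simp only: ac_simps)
      finally show ?thesis
        using True by (simp add: T_def F_def)
    qed (auto simp: tri_map_def T_def im)
  qed
  also have "\<dots> = (\<Sum>k\<in>{n..n + int m}. T k)"
    by (rule sum_shift_int)
  also have "\<dots> = (if n \<le> a \<and> b + int l \<le> n + int m
      then K * (R n a * S (b + int l) (n + int m)) * tri_mult S R (a + int j) b else 0)"
  proof (cases "n \<le> a \<and> b + int l \<le> n + int m")
    case True
    have "(\<Sum>k\<in>{n..n + int m}. T k) = (\<Sum>k\<in>{n..n + int m}. if k \<in> {a + int j..b} then F k else 0)"
      using True by (intro sum.cong refl) (auto simp: T_def)
    also have "\<dots> = K * (R n a * S (b + int l) (n + int m)) * tri_mult S R (a + int j) b"
      using True by (subst sum_if_mem_subset) (auto simp: F_def tri_mult_def sum_distrib_left)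
    finally show ?thesis
      using True by simp
  next
    case False
    then have "T k = 0" for k
      by (auto simp: T_def)
    then show ?thesis
      unfolding if_not_P[OF False] by simp
  qed
  finally show ?thesis
    by (simp only: K_def)
qed

lemma Delta_ext_tri_map:
  assumes inv: "\<And>i j. i \<le> j \<Longrightarrow> tri_mult S R i j = kron i j"
  shows "Delta_ext q (tri_map q R S n m) = tmap (tri_map q R S) (Delta q n m)"
proof (rule ext, clarify)
  fix a :: int and j :: nat and b :: int and l :: nat
  show "Delta_ext q (tri_map q R S n m) ((a, j), (b, l)) = tmap (tri_map q R S) (Delta q n m) ((a, j), (b, l))"
  proof (cases "b = a + int j")
    case True
    have "Delta_ext q (tri_map q R S n m) ((a, j), (b, l)) = tri_map q R S n m (a, j + l) * qbinom q (j + l) j"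
      using True by (simp add: Delta_ext_coeff tri_map_Hsp)
    also have "\<dots> = (if n \<le> a \<and> b + int l \<le> n + int m
        then qfact q m / (qfact q j * qfact q l) * (R n a * S (b + int l) (n + int m)) else 0)"
      using True by (simp add: tri_map_def qbinom_def qfact_nonzero field_simps)
    also have "\<dots> = tmap (tri_map q R S) (Delta q n m) ((a, j), (b, l))"
      using inv[of "a + int j" b] True by (simp add: tmap_tri_map_Delta_coeff kron_def)
    finally show ?thesis .
  next
    case False
    then have "tri_mult S R (a + int j) b = 0"
      using inv[of "a + int j" b] by (cases "a + int j \<le> b") (simp_all add: kron_def tri_mult_below_diag)
    with False show ?thesis
      by (simp add: Delta_ext_coeff tri_map_Hsp tmap_tri_map_Delta_coeff)
  qed
qed

lemma eps_ext_tri_map: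
  assumes inv: "\<And>i j. i \<le> j \<Longrightarrow> tri_mult R S i j = kron i j"
  shows "eps_ext (tri_map q R S n m) = epsb n m"
proof -
  have "eps_ext (tri_map q R S n m) = (\<Sum>b\<in>{n..n + int m} \<times> {..m}. tri_map q R S n m b * epsb (fst b) (snd b))"
    unfolding eps_ext_def by (rule sum_hsupp_superset[OF _ hsupp_tri_map]) simp
  also have "\<dots> = (\<Sum>a\<in>{n..n + int m}. \<Sum>l\<le>m. tri_map q R S n m (a, l) * epsb a l)"
    by (simp add: sum.cartesian_product split_beta)
  also have "\<dots> = (\<Sum>a\<in>{n..n + int m}. \<Sum>l\<le>m. if l = 0 then tri_map q R S n m (a, l) else 0)"
    by (intro sum.cong refl) (simp add: epsb_def)
  also have "\<dots> = (\<Sum>a\<in>{n..n + int m}. qfact q m * (R n a * S a (n + int m)))"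
    by (intro sum.cong refl) (auto simp: tri_map_def sum.delta')
  also have "\<dots> = qfact q m * tri_mult R S n (n + int m)"
    by (simp add: tri_mult_def sum_distrib_left)
  also have "\<dots> = epsb n m"
    using inv[of n "n + int m"] by (simp add: kron_def epsb_def)
  finally show ?thesis .
qed

end

section \<open>The maps \<open>\<phi>\<^sup>(\<^sup>s\<^sup>)\<^sub>\<beta>\<close> as triangular maps\<close>

lemma bprods_Suc: "bprods b n s (Suc j) = bprods b n s j * b (n + int j * int s)"
  by (simp add: bprods_def)

lemma bprods_Suc': "bprods b n s (Suc j) = b n * bprods b (n + int s) s j"
  unfolding bprods_def by (subst prod.lessThan_Suc_shift) (simp add: algebra_simps)

lemma bprods_divide: "bprods (\<lambda>t. b t / (c::'k::field)) n s j = bprods b n s j / c ^ j"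
  by (induction j) (simp_all add: bprods_def)

lemma bprods_1: "bprods b n 1 j = bprod b n j"
  by (simp add: bprods_def bprod_def)

definition phiR :: "'k::field \<Rightarrow> nat \<Rightarrow> (int \<Rightarrow> 'k) \<Rightarrow> int \<Rightarrow> int \<Rightarrow> 'k" where
  "phiR q s b i k = (if i \<le> k \<and> int s dvd (k - i)
     then bprods (\<lambda>t. b t / qfact q s) i s (nat ((k - i) div int s)) else 0)"

definition phiS :: "'k::field \<Rightarrow> nat \<Rightarrow> (int \<Rightarrow> 'k) \<Rightarrow> int \<Rightarrow> int \<Rightarrow> 'k" where
  "phiS q s b i k = (if k = i then 1 else if k = i + int s then - (b i / qfact q s) else 0)"

lemma phiR_diag [simp]: "phiR q s b i i = 1"
  by (simp add: phiR_def bprods_def)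

lemma phiS_diag [simp]: "phiS q s b i i = 1"
  by (simp add: phiS_def)

lemma phiR_multiple: "0 < s \<Longrightarrow> phiR q s b i (i + int s * int j) = bprods (\<lambda>t. b t / qfact q s) i s j"
  by (simp add: phiR_def)

lemma phiR_not_dvd: "\<not> int s dvd (k - i) \<Longrightarrow> phiR q s b i k = 0"
  by (simp add: phiR_def)

lemma int_dvd_diff_shift: "int s dvd (k - (i + int s)) \<longleftrightarrow> int s dvd (k - i)"
  using dvd_add_left_iff[of "int s" "int s" "k - (i + int s)"] by simp

lemma obtain_positive_multiple:
  assumes "0 < s" "i < k" "int s dvd (k - i)"
  obtains j where "k = i + int s * int (Suc j)"
proof -
  obtain d where d: "k - i = int s * d"
    using assms(3) by (auto elim: dvdE)
  moreover have "0 < k - i"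
    using assms(2) by simp
  ultimately have "0 < d"
    using assms(1) by (simp add: zero_less_mult_iff)
  then obtain j where "d = int (Suc j)"
    by (metis gr0_implies_Suc pos_int_cases of_nat_0_less_iff)
  moreover have "k = i + int s * d"
    using d by simp
  ultimately show ?thesis
    using that by blast
qed

lemma phiS_phiR:
  assumes s: "0 < s" and "i \<le> k"
  shows "tri_mult (phiS q s b) (phiR q s b) i k = kron i k"
proof -
  let ?g = "\<lambda>t. b t / qfact q s"
  have "tri_mult (phiS q s b) (phiR q s b) i k
      = phiR q s b i k + (if i + int s \<le> k then - ?g i * phiR q s b (i + int s) k else 0)"
    unfolding tri_mult_def using s \<open>i \<le> k\<close>
    by (subst sum_two_points[of _ i "i + int s"]) (auto simp: phiS_def)
  also have "\<dots> = kron i k"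
  proof (cases "i < k \<and> int s dvd (k - i)")
    case True
    then obtain j where k: "k = i + int s * int (Suc j)"
      using obtain_positive_multiple s by blast
    have k': "k = (i + int s) + int s * int j"
      using k by (simp add: algebra_simps)
    have "phiR q s b i k = ?g i * bprods ?g (i + int s) s j"
      unfolding k phiR_multiple[OF s] by (simp add: bprods_Suc')
    moreover have "phiR q s b (i + int s) k = bprods ?g (i + int s) s j"
      unfolding k' phiR_multiple[OF s] ..
    moreover have "i + int s \<le> k" "i \<noteq> k"
      using True k' by auto
    ultimately show ?thesis
      by (simp add: kron_def)
  next
    case False
    then show ?thesis
      using \<open>i \<le> k\<close> s by (auto simp: kron_def phiR_not_dvd int_dvd_diff_shift)
  qed
  finally show ?thesis .
qed

lemma phiR_phiS:
  assumes s: "0 < s" and "i \<le> k"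
  shows "tri_mult (phiR q s b) (phiS q s b) i k = kron i k"
proof -
  let ?g = "\<lambda>t. b t / qfact q s"
  have "tri_mult (phiR q s b) (phiS q s b) i k
      = phiR q s b i k + (if i \<le> k - int s then phiR q s b i (k - int s) * - ?g (k - int s) else 0)"
    unfolding tri_mult_def using s \<open>i \<le> k\<close>
    by (subst sum_two_points[of _ k "k - int s"]) (auto simp: phiS_def)
  also have "\<dots> = kron i k"
  proof (cases "i < k \<and> int s dvd (k - i)")
    case True
    then obtain j where k: "k = i + int s * int (Suc j)"
      using obtain_positive_multiple s by blast
    have k': "k - int s = i + int s * int j" "k - int s = i + int j * int s"
      using k by (simp_all add: algebra_simps)
    have "phiR q s b i k = bprods ?g i s j * ?g (i + int j * int s)"
      unfolding k phiR_multiple[OF s] by (simp add: bprods_Suc)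
    moreover have "phiR q s b i (k - int s) = bprods ?g i s j"
      unfolding k'(1) phiR_multiple[OF s] ..
    moreover have "i \<le> k - int s" "i \<noteq> k"
      using True k' by auto
    ultimately show ?thesis
      by (simp add: kron_def k'(2))
  next
    case False
    have "\<not> int s dvd (k - int s - i)" if "\<not> int s dvd (k - i)"
      using that int_dvd_diff_shift[of s k i] by (simp add: algebra_simps)
    then show ?thesis
      using False \<open>i \<le> k\<close> s by (auto simp: kron_def phiR_not_dvd)
  qed
  finally show ?thesis .
qed

lemma phiR_from_diag:
  assumes "0 < s"
  shows "phiR q s b n (n + int d) = (if s dvd d then bprods b n s (d div s) / qfact q s ^ (d div s) else 0)"
proof (cases "s dvd d")
  case True
  then obtain i where "d = s * i"
    by (auto elim: dvdE)
  then show ?thesis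
    using assms phiR_multiple[OF assms, of q b n i] by (simp add: bprods_divide)
qed (simp add: phiR_not_dvd)

lemma tri_map_phiR_phiS:
  assumes "0 < s"
  shows "tri_map q (phiR q s b) (phiS q s b) n m (a, l) =
    (if n \<le> a \<and> a + int l = n + int m then qfact q m / qfact q l * phiR q s b n a else 0)
    - (if n \<le> a \<and> a + int l + int s = n + int m
       then qfact q m / qfact q l * phiR q s b n a * (b (n + int m - int s) / qfact q s) else 0)"
  using assms by (auto simp: tri_map_def phiS_def)

definition phi_coeffs :: "'k::field \<Rightarrow> nat \<Rightarrow> (int \<Rightarrow> 'k) \<Rightarrow> int \<Rightarrow> nat \<Rightarrow> 'k hvec" where
  "phi_coeffs q s b n m = (\<lambda>(a, l). (if l = m \<and> a = n then 1 else 0) +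
     (if l < m \<and> s dvd (m - l) then
       (if a = n + int (m - l) then qfact q m / (qfact q l * qfact q s ^ ((m - l) div s))
          * bprods b n s ((m - l) div s) else 0)
       - (if a = n + int (m - l) - int s then qfact q m / (qfact q l * qfact q s ^ ((m - l) div s))
          * bprods b n s ((m - l) div s - 1) * b (n + int m - int s) else 0)
     else 0))"

context qint_nonzero
begin

lemma tri_map_phiR_phiS_eq_phi_coeffs:
  assumes s: "0 < s"
  shows "tri_map q (phiR q s b) (phiS q s b) n m = phi_coeffs q s b n m"
proof (rule ext, clarify)
  fix a :: int and l :: nat
  let ?lhs = "tri_map q (phiR q s b) (phiS q s b) n m (a, l)"
  consider (top) "n \<le> a" "a + int l = n + int m"
    | (next_diag) "n \<le> a" "a + int l + int s = n + int m"
    | (zero) "\<not> (n \<le> a \<and> a + int l = n + int m)" "\<not> (n \<le> a \<and> a + int l + int s = n + int m)"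
    by blast
  then show "?lhs = phi_coeffs q s b n m (a, l)"
  proof cases
    case top
    then have a: "a = n + int (m - l)" and "l \<le> m"
      by auto
    have lhs: "?lhs = qfact q m / qfact q l * phiR q s b n (n + int (m - l))"
      using top s a by (simp add: tri_map_phiR_phiS)
    show ?thesis
    proof (cases "l = m")
      case True
      with a lhs show ?thesis
        by (simp add: phi_coeffs_def qfact_nonzero)
    next
      case False
      with \<open>l \<le> m\<close> have "l < m"
        by simp
      with a s show ?thesis
        using lhs[unfolded phiR_from_diag[OF s]] by (simp add: phi_coeffs_def)
    qed
  next
    case next_diag
    define d where "d = m - l - s"
    have a: "a = n + int d" and "l + s \<le> m"
      using next_diag by (auto simp: d_def)
    have lhs: "?lhs = - (qfact q m / qfact q l * phiR q s b n a * (b (n + int m - int s) / qfact q s))"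
      using next_diag s by (simp add: tri_map_phiR_phiS)
    show ?thesis
    proof (cases "s dvd d")
      case True
      then obtain i where i: "d = s * i"
        by (auto elim: dvdE)
      then have ml: "m - l = s * Suc i"
        using \<open>l + s \<le> m\<close> by (simp add: d_def)
      have "phiR q s b n a = bprods b n s i / qfact q s ^ i"
        unfolding a i phiR_from_diag[OF s] using s by simp
      then have "?lhs = - (qfact q m / (qfact q l * qfact q s ^ Suc i) * bprods b n s i * b (n + int m - int s))"
        using qfact_nonzero[of l] qfact_nonzero[of s] by (simp add: lhs field_simps)
      with a ml s \<open>l + s \<le> m\<close> show ?thesis
        by (simp add: phi_coeffs_def d_def)
    next
      case False
      then have "\<not> s dvd (m - l)"
        using dvd_diff_nat[of s "m - l" s] by (auto simp: d_def)
      with a lhs s False \<open>l + s \<le> m\<close> show ?thesis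
        by (simp add: phi_coeffs_def phiR_from_diag)
    qed
  next
    case zero
    have "s \<le> m - l" if "l < m" "s dvd (m - l)"
      using that by (simp add: dvd_imp_le)
    with zero s show ?thesis
      by (auto simp: tri_map_phiR_phiS phi_coeffs_def)
  qed
qed

end

lemma less_and_dvd_diff_iff:
  fixes l m s :: nat
  assumes "0 < s"
  shows "l < m \<and> s dvd (m - l) \<longleftrightarrow> 1 \<le> (m - l) div s \<and> (m - l) div s * s \<le> m \<and> l = m - (m - l) div s * s"
    (is "?D \<longleftrightarrow> ?R")
proof
  assume ?D
  then have "m - l = (m - l) div s * s" "l < m"
    by simp_all
  moreover from this have "0 < (m - l) div s"
    by (metis gr0I mult_0 zero_less_diff)
  ultimately show ?R
    by linarith
next
  assume ?R
  then have "m - l = (m - l) div s * s" "0 < (m - l) div s * s"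
    using assms by auto
  then show ?D
    by (metis dvd_triv_right zero_less_diff)
qed

lemma phis_coeff:
  assumes s: "1 < s"
  shows "phis q s b n m (a, l) = bas n m (a, l) + (if l < m \<and> s dvd (m - l) then
    qbinom_iter q m s ((m - l) div s) * ((if a = n + int (m - l) then bprods b n s ((m - l) div s) else 0)
      - (if a = n + int (m - l) - int s then bprods b n s ((m - l) div s - 1) * b (n + int m - int s) else 0))
    else 0)"
proof -
  define D where "D \<longleftrightarrow> l < m \<and> s dvd (m - l)"
  define i0 where "i0 = (m - l) div s"
  define G where "G = qbinom_iter q m s i0 * ((if a = n + int (m - l) then bprods b n s i0 else 0)
      - (if a = n + int (m - l) - int s then bprods b n s (i0 - 1) * b (n + int m - int s) else 0))"
  have D_iff: "D \<longleftrightarrow> 1 \<le> i0 \<and> i0 * s \<le> m \<and> l = m - i0 * s"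
    using s by (simp add: D_def i0_def less_and_dvd_diff_iff)
  have "phis q s b n m (a, l) = bas n m (a, l) + (\<Sum>i\<in>{1..m div s}. qbinom_iter q m s i *
      (bprods b n s i * bas (n + int (i * s)) (m - i * s) (a, l)
       - bprods b n s (i - 1) * b (n + int m - int s) * bas (n + int (i * s) - int s) (m - i * s) (a, l)))"
    using s by (cases "m < s") (simp_all add: phis_def sum_apply_fun)
  also have "\<dots> = bas n m (a, l) + (\<Sum>i\<in>{1..m div s}. if i = i0 \<and> D then G else 0)"
  proof (intro arg_cong2[where f = "(+)"] refl sum.cong)
    fix i
    assume i: "i \<in> {1..m div s}"
    then have "i * s \<le> m"
      by (meson atLeastAtMost_iff div_times_less_eq_dividend le_trans mult_le_mono1)
    show "qbinom_iter q m s i *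
        (bprods b n s i * bas (n + int (i * s)) (m - i * s) (a, l)
         - bprods b n s (i - 1) * b (n + int m - int s) * bas (n + int (i * s) - int s) (m - i * s) (a, l))
        = (if i = i0 \<and> D then G else 0)"
    proof (cases "l = m - i * s")
      case True
      then have "m - l = i * s"
        using \<open>i * s \<le> m\<close> by simp
      then have "i = i0"
        using s by (simp add: i0_def)
      with True i \<open>i * s \<le> m\<close> have D
        using D_iff by simp
      with True \<open>i = i0\<close> \<open>m - l = i * s\<close> show ?thesis
        by (simp add: bas_def G_def)
    next
      case False
      then have "\<not> (i = i0 \<and> D)"
        using D_iff by blast
      with False show ?thesis
        unfolding if_not_P[OF \<open>\<not> (i = i0 \<and> D)\<close>] by (simp add: bas_def)
    qed
  qed
  also have "\<dots> = bas n m (a, l) + (if D then G else 0)"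
  proof -
    have "D \<Longrightarrow> i0 \<in> {1..m div s}"
      using D_iff by (simp add: i0_def div_le_mono)
    then show ?thesis
      by (subst sum_if_single) auto
  qed
  finally show ?thesis
    by (simp only: D_def G_def i0_def)
qed

context qint_nonzero
begin

lemma phis_eq_phi_coeffs:
  assumes s: "1 < s"
  shows "phis q s b n m = phi_coeffs q s b n m"
proof (rule ext, clarify)
  fix a :: int and l :: nat
  show "phis q s b n m (a, l) = phi_coeffs q s b n m (a, l)"
  proof (cases "l < m \<and> s dvd (m - l)")
    case True
    then have "(m - l) div s * s \<le> m" "m - (m - l) div s * s = l"
      by (auto simp: dvd_div_mult_self)
    then have "qbinom_iter q m s ((m - l) div s) = qfact q m / (qfact q l * qfact q s ^ ((m - l) div s))"
      using qbinom_iter_eq by (simp add: mult.commute)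
    with True show ?thesis
      by (simp add: phis_coeff[OF s] phi_coeffs_def bas_def right_diff_distrib mult.assoc)
  next
    case False
    show ?thesis
      unfolding phis_coeff[OF s] phi_coeffs_def prod.case if_not_P[OF False] by (simp add: bas_def)
  qed
qed

lemma phi1_eq_phi_coeffs: "phi1 q b n m = phi_coeffs q 1 b n m"
proof (rule ext, clarify)
  fix a :: int and l :: nat
  define G where "G = qfall q m (m - l) * ((if a = n + int m - int l then bprod b n (m - l) else 0)
      - (if a = n + int m - int l - 1 then bprod b n (m - l - 1) * b (n + int m - 1) else 0))"
  have "phi1 q b n m (a, l) = bas n m (a, l) + (\<Sum>l'<m. qfall q m (m - l') *
        (bprod b n (m - l') * bas (n + int m - int l') l' (a, l)
         - bprod b n (m - l' - 1) * b (n + int m - 1) * bas (n + int m - int l' - 1) l' (a, l)))"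
    by (simp add: phi1_def sum_apply_fun)
  also have "\<dots> = bas n m (a, l) + (\<Sum>l'<m. if l' = l then G else 0)"
    by (intro arg_cong2[where f = "(+)"] refl sum.cong) (auto simp: bas_def G_def)
  also have "\<dots> = bas n m (a, l) + (if l < m then G else 0)"
    by (simp add: sum.delta')
  also have "\<dots> = phi_coeffs q 1 b n m (a, l)"
  proof (cases "l < m")
    case True
    have "qfall q m (m - l) = qfact q m / qfact q l"
      using qfall_eq[of "m - l" m] True by simp
    moreover have "qfact q (Suc 0) = 1"
      by (simp add: qfact_def)
    moreover have "n + int (m - l) = n + int m - int l"
      using True by simp
    ultimately show ?thesis
      using True by (simp add: phi_coeffs_def G_def bas_def bprods_1[unfolded One_nat_def]
          right_diff_distrib mult.assoc)
  qed (simp add: phi_coeffs_def bas_def)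
  finally show "phi1 q b n m (a, l) = phi_coeffs q 1 b n m (a, l)" .
qed

lemma phi_eq_tri_map: "0 < s \<Longrightarrow> phi q s b = tri_map q (phiR q s b) (phiS q s b)"
  using phi1_eq_phi_coeffs phis_eq_phi_coeffs tri_map_phiR_phiS_eq_phi_coeffs
  by (auto simp: phi_def fun_eq_iff)

end

lemma phi_below_degree: "m < s \<Longrightarrow> phi q s b n m = bas n m"
  by (auto simp: phi_def phi1_def phis_def)

text \<open>\<open>\<phi>\<^sup>(\<^sup>1\<^sup>)\<^sub>\<beta>\<^sub>1 \<circ> \<dots> \<circ> \<phi>\<^sup>(\<^sup>j\<^sup>)\<^sub>\<beta>\<^sub>j = tri_map q (chainR q \<beta> j) (chainS q \<beta> j)\<close>.\<close>

primrec chainR :: "'k::field \<Rightarrow> (nat \<Rightarrow> int \<Rightarrow> 'k) \<Rightarrow> nat \<Rightarrow> int \<Rightarrow> int \<Rightarrow> 'k" where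
  "chainR q \<beta> 0 = kron"
| "chainR q \<beta> (Suc j) = tri_mult (phiR q (Suc j) (\<beta> (Suc j))) (chainR q \<beta> j)"

primrec chainS :: "'k::field \<Rightarrow> (nat \<Rightarrow> int \<Rightarrow> 'k) \<Rightarrow> nat \<Rightarrow> int \<Rightarrow> int \<Rightarrow> 'k" where
  "chainS q \<beta> 0 = kron"
| "chainS q \<beta> (Suc j) = tri_mult (chainS q \<beta> j) (phiS q (Suc j) (\<beta> (Suc j)))"

lemma chainS_chainR: "i \<le> k \<Longrightarrow> tri_mult (chainS q \<beta> j) (chainR q \<beta> j) i k = kron i k"
proof (induction j arbitrary: i k)
  case (Suc j)
  show ?case
    unfolding chainS.simps chainR.simps
    by (rule tri_mult_inverse_mult[OF phiS_phiR Suc.IH Suc.prems]) simp_all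
qed (simp add: tri_mult_kron_left)

lemma chainR_chainS: "i \<le> k \<Longrightarrow> tri_mult (chainR q \<beta> j) (chainS q \<beta> j) i k = kron i k"
proof (induction j arbitrary: i k)
  case (Suc j)
  show ?case
    unfolding chainS.simps chainR.simps
    by (rule tri_mult_inverse_mult[OF Suc.IH phiR_phiS Suc.prems]) simp_all
qed (simp add: tri_mult_kron_left)

lemma chainR_diag: "chainR q \<beta> j i i = 1" and chainS_diag: "chainS q \<beta> j i i = 1"
  by (induction j) (simp_all add: tri_mult_diag kron_def)

lemma chainR_cong: "(\<And>i. 1 \<le> i \<Longrightarrow> i \<le> j \<Longrightarrow> \<beta> i = \<beta>' i) \<Longrightarrow> chainR q \<beta> j = chainR q \<beta>' j"
  by (induction j) auto

lemma PhiChain_bas_stable: "m \<le> M \<Longrightarrow> PhiChain q \<beta> M (bas n m) = PhiChain q \<beta> m (bas n m)"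
  by (induction M rule: dec_induct) (simp_all add: phi_below_degree)

lemma PhiMap_eq_PhiChain: "PhiMap q \<beta> n m = PhiChain q \<beta> m (bas n m)"
  by (simp add: PhiMap_def)

lemma PhiMap_0: "PhiMap q \<beta> n 0 = bas n 0"
  by (simp add: PhiMap_def)

lemma PhiMap_1: "PhiMap q \<beta> n 1 = bas n 1 + smult (\<beta> 1 n) (bas (n + 1) 0 - bas n 0)"
  by (rule ext) (simp add: PhiMap_def phi_def phi1_def qfall_def bprod_def qint_def right_diff_distrib)

context qint_nonzero
begin

lemma PhiChain_eq_ext_tri_map:
  "v \<in> Hsp \<Longrightarrow> PhiChain q \<beta> j v = ext (tri_map q (chainR q \<beta> j) (chainS q \<beta> j)) v"
proof (induction j arbitrary: v)
  case 0
  then show ?case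
    by (simp add: tri_map_kron ext_bas_id)
next
  case (Suc j)
  let ?\<phi> = "phi q (Suc j) (\<beta> (Suc j))"
  have \<phi>: "?\<phi> = tri_map q (phiR q (Suc j) (\<beta> (Suc j))) (phiS q (Suc j) (\<beta> (Suc j)))"
    by (simp add: phi_eq_tri_map)
  have "ext ?\<phi> v \<in> Hsp"
    unfolding \<phi> by (rule ext_Hsp[OF Suc.prems tri_map_Hsp])
  then have "PhiChain q \<beta> (Suc j) v = ext (tri_map q (chainR q \<beta> j) (chainS q \<beta> j)) (ext ?\<phi> v)"
    using Suc.IH by simp
  also have "\<dots> = ext (tri_map q (chainR q \<beta> (Suc j)) (chainS q \<beta> (Suc j))) v"
    unfolding \<phi> by (simp add: ext_comp[OF Suc.prems tri_map_Hsp] ext_tri_map)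
  finally show ?case .
qed

lemma PhiMap_eq_tri_map: "i \<le> m \<Longrightarrow> PhiMap q \<beta> n i = tri_map q (chainR q \<beta> m) (chainS q \<beta> m) n i"
  by (simp add: PhiMap_eq_PhiChain PhiChain_bas_stable[symmetric] PhiChain_eq_ext_tri_map)

lemma PhiMap_Hsp: "PhiMap q \<beta> n m \<in> Hsp"
  by (simp add: PhiMap_eq_tri_map[OF order_refl] tri_map_Hsp)

lemma PhiMap_above_degree: "m < l \<Longrightarrow> PhiMap q \<beta> n m (a, l) = 0"
  by (simp add: PhiMap_eq_tri_map[OF order_refl] tri_map_above_degree)

lemma PhiMap_top_degree: "PhiMap q \<beta> n m (a, m) = (if a = n then 1 else 0)"
  by (simp add: PhiMap_eq_tri_map[OF order_refl] tri_map_top_degree chainR_diag chainS_diag)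

lemma Delta_ext_PhiMap: "Delta_ext q (PhiMap q \<beta> n m) = tmap (PhiMap q \<beta>) (Delta q n m)"
proof -
  have "Delta_ext q (PhiMap q \<beta> n m) = tmap (tri_map q (chainR q \<beta> m) (chainS q \<beta> m)) (Delta q n m)"
    unfolding PhiMap_eq_tri_map[OF order_refl] by (rule Delta_ext_tri_map[OF chainS_chainR])
  also have "\<dots> = tmap (PhiMap q \<beta>) (Delta q n m)"
    unfolding fun_eq_iff tmap_Delta_coeff by (auto simp: PhiMap_eq_tri_map[of _ m] intro!: sum.cong)
  finally show ?thesis .
qed

lemma eps_ext_PhiMap: "eps_ext (PhiMap q \<beta> n m) = epsb n m"
  unfolding PhiMap_eq_tri_map[OF order_refl] by (rule eps_ext_tri_map[OF chainR_chainS])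

end

section \<open>Unitriangular linear maps are bijective\<close>

locale unitriangular =
  fixes \<phi> :: "int \<Rightarrow> nat \<Rightarrow> ('k::comm_ring_1) hvec"
  assumes Hsp: "\<phi> n m \<in> Hsp"
    and above_degree: "m < l \<Longrightarrow> \<phi> n m (a, l) = 0"
    and top_degree: "\<phi> n m (a, m) = (if a = n then 1 else 0)"
begin

lemma ext_top_degree:
  assumes "w \<in> Hsp" and deg: "\<And>b. b \<in> hsupp w \<Longrightarrow> snd b \<le> d"
  shows "ext \<phi> w (a, d) = w (a, d)"
proof -
  have "ext \<phi> w (a, d) = (\<Sum>b\<in>hsupp w. if b = (a, d) then w b else 0)"
  proof (unfold ext_def, intro sum.cong refl)
    fix b
    assume "b \<in> hsupp w"
    then consider "snd b < d" | "snd b = d"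
      using deg[of b] by linarith
    then show "w b * \<phi> (fst b) (snd b) (a, d) = (if b = (a, d) then w b else 0)"
      by cases (auto simp: above_degree top_degree prod_eq_iff)
  qed
  also have "\<dots> = w (a, d)"
    using \<open>w \<in> Hsp\<close> by (auto simp: Hsp_def hsupp_def sum.delta')
  finally show ?thesis .
qed

lemma ext_above_degree:
  assumes "\<And>b. b \<in> hsupp w \<Longrightarrow> snd b \<le> d" "d < l"
  shows "ext \<phi> w (a, l) = 0"
  unfolding ext_def
proof (intro sum.neutral ballI)
  fix b
  assume "b \<in> hsupp w"
  then have "snd b < l"
    using assms by (meson le_less_trans)
  then show "w b * \<phi> (fst b) (snd b) (a, l) = 0"
    by (simp add: above_degree)
qed

lemma ext_eq_0_imp_eq_0:
  assumes "w \<in> Hsp" "ext \<phi> w = 0"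
  shows "w = 0"
proof -
  have "w = 0" if "w \<in> Hsp" "\<forall>b\<in>hsupp w. snd b < d" "ext \<phi> w = 0" for w d
    using that
  proof (induction d arbitrary: w)
    case 0
    then show ?case
      by (auto simp: hsupp_def)
  next
    case (Suc d)
    have "w (a, d) = ext \<phi> w (a, d)" for a
      using Suc.prems(1,2) by (intro ext_top_degree[symmetric]) (auto simp: less_Suc_eq_le)
    then have "w (a, d) = 0" for a
      using Suc.prems(3) by simp
    then have "\<forall>b\<in>hsupp w. snd b < d"
      using Suc.prems(2) by (auto simp: hsupp_def less_Suc_eq)
    with Suc show ?case
      by blast
  qed
  moreover obtain d where "\<And>b. b \<in> hsupp w \<Longrightarrow> snd b < d"
    using Hsp_degree_bounded[OF assms(1)] by blast
  ultimately show ?thesis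
    using assms by blast
qed

lemma ext_cancels_top_degree:
  assumes w: "w \<in> Hsp" "\<forall>b\<in>hsupp w. snd b < Suc d"
  defines "t \<equiv> \<lambda>c. if snd c = d then w c else 0"
  shows "t \<in> Hsp" and "\<forall>b\<in>hsupp (w - ext \<phi> t). snd b < d"
proof -
  have "hsupp t \<subseteq> hsupp w"
    by (auto simp: t_def hsupp_def)
  with w(1) show t: "t \<in> Hsp"
    by (auto simp: Hsp_def intro: finite_subset)
  have t_deg: "\<And>b. b \<in> hsupp t \<Longrightarrow> snd b \<le> d"
    by (auto simp: t_def hsupp_def split: if_splits)
  show "\<forall>b\<in>hsupp (w - ext \<phi> t). snd b < d"
  proof (rule ballI, rule ccontr, clarify)
    fix a l
    assume "(a, l) \<in> hsupp (w - ext \<phi> t)" "\<not> snd (a, l) < d"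
    moreover have "w (a, l) = ext \<phi> t (a, l)"
    proof (cases "l = d")
      case True
      then show ?thesis
        using ext_top_degree[OF t t_deg] by (simp add: t_def)
    next
      case False
      with \<open>\<not> snd (a, l) < d\<close> have "d < l"
        by simp
      then have "(a, l) \<notin> hsupp w"
        using w(2) by auto
      then have "w (a, l) = 0"
        by (simp add: hsupp_def)
      with ext_above_degree[OF t_deg \<open>d < l\<close>] show ?thesis
        by simp
    qed
    ultimately show False
      by (simp add: hsupp_def)
  qed
qed

lemma ext_surj: "w \<in> Hsp \<Longrightarrow> w \<in> ext \<phi> ` Hsp"
proof -
  have "w \<in> ext \<phi> ` Hsp" if "w \<in> Hsp" "\<forall>b\<in>hsupp w. snd b < d" for w d
    using that
  proof (induction d arbitrary: w)
    case 0
    then have "w = 0"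
      by (auto simp: hsupp_def)
    moreover have "ext \<phi> 0 = 0"
      by (simp add: ext_def hsupp_def fun_eq_iff)
    ultimately show ?case
      using zero_Hsp by (metis image_eqI)
  next
    case (Suc d)
    define t where "t = (\<lambda>c. if snd c = d then w c else 0)"
    have t: "t \<in> Hsp"
      unfolding t_def using Suc.prems by (rule ext_cancels_top_degree)
    have "w - ext \<phi> t \<in> Hsp"
      using Suc.prems(1) ext_Hsp[OF t Hsp] by simp
    moreover have "\<forall>b\<in>hsupp (w - ext \<phi> t). snd b < d"
      unfolding t_def using Suc.prems by (rule ext_cancels_top_degree)
    ultimately obtain v where v: "v \<in> Hsp" "w - ext \<phi> t = ext \<phi> v"
      using Suc.IH by blast
    then have "w = ext \<phi> (v + t)"
      by (simp add: ext_add[OF v(1) t] diff_eq_eq)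
    moreover have "v + t \<in> Hsp"
      using v t by simp
    ultimately show ?case
      by blast
  qed
  moreover assume "w \<in> Hsp"
  moreover obtain d where "\<And>b. b \<in> hsupp w \<Longrightarrow> snd b < d"
    using Hsp_degree_bounded[OF \<open>w \<in> Hsp\<close>] by blast
  ultimately show "w \<in> ext \<phi> ` Hsp"
    by blast
qed

lemma bij_betw_ext: "bij_betw (ext \<phi>) Hsp Hsp"
proof (rule bij_betw_imageI)
  show "inj_on (ext \<phi>) Hsp"
  proof (rule inj_onI)
    fix u v
    assume "u \<in> Hsp" "v \<in> Hsp" "ext \<phi> u = ext \<phi> v"
    then have "ext \<phi> (u - v) = 0"
      by (simp add: ext_diff)
    with \<open>u \<in> Hsp\<close> \<open>v \<in> Hsp\<close> show "u = v"
      using ext_eq_0_imp_eq_0[of "u - v"] by simp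
  qed
  show "ext \<phi> ` Hsp = Hsp"
  proof
    show "ext \<phi> ` Hsp \<subseteq> Hsp"
      by (rule image_subsetI) (rule ext_Hsp[OF _ Hsp])
    show "Hsp \<subseteq> ext \<phi> ` Hsp"
      by (rule subsetI) (rule ext_surj)
  qed
qed

end

context qint_nonzero
begin

lemma unitriangular_PhiMap: "unitriangular (PhiMap q \<beta>)"
  by unfold_locales (simp_all add: PhiMap_Hsp PhiMap_above_degree PhiMap_top_degree)

lemma PhiMap_in_Aut_star: "PhiMap q \<beta> \<in> Aut_star q"
  unfolding Aut_star_def is_coalg_aut_def
  using unitriangular.bij_betw_ext[OF unitriangular_PhiMap] PhiMap_Hsp Delta_ext_PhiMap
    eps_ext_PhiMap PhiMap_0 PhiMap_1
  by blast

section \<open>Injectivity and surjectivity of \<open>\<Phi>\<close>\<close>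

lemma chainR_Suc_corner:
  "chainR q \<beta> (Suc k) n (n + int (Suc k)) = chainR q \<beta> k n (n + int (Suc k)) + \<beta> (Suc k) n / qfact q (Suc k)"
proof -
  let ?m = "Suc k"
  have "chainR q \<beta> ?m n (n + int ?m) = tri_mult (phiR q ?m (\<beta> ?m)) (chainR q \<beta> k) n (n + int ?m)"
    by simp
  also have "\<dots> = phiR q ?m (\<beta> ?m) n n * chainR q \<beta> k n (n + int ?m)
      + phiR q ?m (\<beta> ?m) n (n + int ?m) * chainR q \<beta> k (n + int ?m) (n + int ?m)"
    unfolding tri_mult_def
  proof (subst sum_two_points[of _ n "n + int ?m"])
    fix u
    assume u: "u \<in> {n..n + int ?m}" "u \<noteq> n" "u \<noteq> n + int ?m"
    then have "\<not> int ?m dvd (u - n)"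
      using zdvd_not_zless[of "u - n" "int ?m"] by auto
    then show "phiR q ?m (\<beta> ?m) n u * chainR q \<beta> k u (n + int ?m) = 0"
      by (simp add: phiR_not_dvd)
  qed auto
  also have "\<dots> = chainR q \<beta> k n (n + int ?m) + \<beta> ?m n / qfact q ?m"
    using phiR_multiple[of ?m q "\<beta> ?m" n 1] by (simp add: chainR_diag bprods_def)
  finally show ?thesis .
qed

text \<open>The coefficient of \<open>x\<^sup>n\<^sup>+\<^sup>m\<close> in \<open>\<Phi>(\<beta>)(x\<^sup>n y\<^sup>m)\<close> is \<open>\<beta>\<^sup>(\<^sup>m\<^sup>)\<^sub>n\<close> plus a term depending only on
  \<open>\<beta>\<^sup>(\<^sup>1\<^sup>)\<close>, \dots, \<open>\<beta>\<^sup>(\<^sup>m\<^sup>-\<^sup>1\<^sup>)\<close>.\<close>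

lemma PhiMap_coeff_x_power:
  "PhiMap q \<beta> n (Suc k) (n + int (Suc k), 0) = qfact q (Suc k) * chainR q \<beta> k n (n + int (Suc k)) + \<beta> (Suc k) n"
proof -
  have "PhiMap q \<beta> n (Suc k) (n + int (Suc k), 0) = qfact q (Suc k) * chainR q \<beta> (Suc k) n (n + int (Suc k))"
    unfolding PhiMap_eq_tri_map[OF order_refl] by (simp add: tri_map_def chainS_diag del: chainR.simps chainS.simps)
  then show ?thesis
    unfolding chainR_Suc_corner using qfact_nonzero[of "Suc k"] by (simp add: distrib_left)
qed

lemma inj_on_PhiMap: "inj_on (PhiMap q) G_inf"
proof (rule inj_onI)
  fix \<beta> \<beta>'
  assume "\<beta> \<in> G_inf" "\<beta>' \<in> G_inf" and eq: "PhiMap q \<beta> = PhiMap q \<beta>'"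
  have "\<beta> j = \<beta>' j" for j
  proof (induction j rule: less_induct)
    case (less j)
    show ?case
    proof (cases j)
      case 0
      with \<open>\<beta> \<in> G_inf\<close> \<open>\<beta>' \<in> G_inf\<close> show ?thesis
        by (simp add: G_inf_def)
    next
      case (Suc k)
      have R: "chainR q \<beta> k = chainR q \<beta>' k"
        using less Suc by (intro chainR_cong) auto
      show ?thesis
      proof
        fix n
        have "PhiMap q \<beta> n j (n + int j, 0) = PhiMap q \<beta>' n j (n + int j, 0)"
          using eq by simp
        then show "\<beta> j n = \<beta>' j n"
          unfolding Suc PhiMap_coeff_x_power R by simp
      qed
    qed
  qed
  then show "\<beta> = \<beta>'"
    by blast
qed

end

text \<open>Reading off \<open>\<beta>\<^sup>(\<^sup>1\<^sup>)\<close>, \dots, \<open>\<beta>\<^sup>(\<^sup>m\<^sup>)\<close> from the coefficients of \<open>x\<^sup>n\<^sup>+\<^sup>j\<close> in \<open>\<psi>(x\<^sup>n y\<^sup>j)\<close>, \<open>j \<le> m\<close>.\<close>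

primrec recover_beta :: "'k::field \<Rightarrow> (int \<Rightarrow> nat \<Rightarrow> 'k hvec) \<Rightarrow> nat \<Rightarrow> nat \<Rightarrow> int \<Rightarrow> 'k" where
  "recover_beta q \<psi> 0 = (\<lambda>_ _. 0)"
| "recover_beta q \<psi> (Suc m) = (recover_beta q \<psi> m)(Suc m := (\<lambda>n. \<psi> n (Suc m) (n + int (Suc m), 0)
      - qfact q (Suc m) * chainR q (recover_beta q \<psi> m) m n (n + int (Suc m))))"

lemma recover_beta_stable: "1 \<le> i \<Longrightarrow> i \<le> m \<Longrightarrow> recover_beta q \<psi> m i = recover_beta q \<psi> i i"
  by (induction m) (auto simp: le_Suc_eq)

context qint_nonzero
begin

text \<open>The \<open>(x\<^sup>n, x\<^sup>n\<^sup>+\<^sup>m)\<close>-skew-primitive elements with \<open>m \<ge> 2\<close> are the multiples of \<open>x\<^sup>n\<^sup>+\<^sup>m - x\<^sup>n\<close>.\<close>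

lemma skew_primitive_eq_0:
  assumes "d \<in> Hsp" "2 \<le> m"
    and skew: "Delta_ext q d = tens (bas n 0) d + tens d (bas (n + int m) 0)"
    and top: "d (n + int m, 0) = 0"
  shows "d = 0"
proof (rule ext, clarify)
  fix a :: int and p :: nat
  have key: "(if b = a' + int j then d (a', j + l) * qbinom q (j + l) j else 0)
      = bas n 0 (a', j) * d (b, l) + d (a', j) * bas (n + int m) 0 (b, l)" for a' j b l
    using fun_cong[OF skew, of "((a', j), (b, l))"] \<open>d \<in> Hsp\<close> by (simp add: Delta_ext_coeff tens_def)
  consider "2 \<le> p" | "p = 0" | "p = 1"
    by linarith
  then show "d (a, p) = 0 (a, p)"
  proof cases
    case 1
    then show ?thesis
      using key[of "a + 1" a 1 "p - 1"] qbinom_nonzero[of p 1] by (simp add: bas_def)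
  next
    case 2
    have "d (a, 0) = bas n 0 (a, 0) * d (a, 0) + d (a, 0) * bas (n + int m) 0 (a, 0)"
      using key[of a a 0 0] by simp
    moreover have "d (n, 0) = 0"
      using key[of "n + int m" n 0 0] \<open>2 \<le> m\<close> top by (simp add: bas_def)
    ultimately show ?thesis
      using 2 top by (auto simp: bas_def split: if_splits)
  next
    case 3
    have "d (a, 1) = d (a, 1) * bas (n + int m) 0 (a + 1, 0)"
      using key[of "a + 1" a 1 0] by (simp add: bas_def)
    moreover have "d (a, 1) = bas n 0 (a, 0) * d (a, 1)"
      using key[of a a 0 1] by (simp add: bas_def)
    ultimately show ?thesis
      using 3 \<open>2 \<le> m\<close> by (auto simp: bas_def split: if_splits)
  qed
qed

lemma Aut_star_eq_by_lower_degrees: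
  assumes \<psi>: "\<psi> \<in> Aut_star q" and \<phi>: "\<phi> \<in> Aut_star q"
    and lower: "\<And>i n'. i < m \<Longrightarrow> \<psi> n' i = \<phi> n' i"
    and coeff: "\<psi> n m (n + int m, 0) = \<phi> n m (n + int m, 0)"
  shows "\<psi> n m = \<phi> n m"
proof -
  have Hsp: "\<psi> n m \<in> Hsp" "\<phi> n m \<in> Hsp"
    and Delta: "Delta_ext q (\<psi> n m) = tmap \<psi> (Delta q n m)" "Delta_ext q (\<phi> n m) = tmap \<phi> (Delta q n m)"
    and deg_0: "\<And>n'. \<psi> n' 0 = bas n' 0" "\<And>n'. \<phi> n' 0 = bas n' 0"
    and deg_1: "\<exists>b. \<psi> n 1 = bas n 1 + smult b (bas (n + 1) 0 - bas n 0)"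
      "\<exists>b. \<phi> n 1 = bas n 1 + smult b (bas (n + 1) 0 - bas n 0)"
    using \<psi> \<phi> by (simp_all add: Aut_star_def is_coalg_aut_def)
  consider "m = 0" | "m = 1" | "2 \<le> m"
    by linarith
  then show ?thesis
  proof cases
    case 1
    then show ?thesis
      by (simp add: deg_0)
  next
    case 2
    obtain b b' where b: "\<psi> n 1 = bas n 1 + smult b (bas (n + 1) 0 - bas n 0)"
      and b': "\<phi> n 1 = bas n 1 + smult b' (bas (n + 1) 0 - bas n 0)"
      using deg_1 by blast
    have "b = \<psi> n 1 (n + 1, 0)" "b' = \<phi> n 1 (n + 1, 0)"
      unfolding b b' by (simp_all add: bas_def)
    with coeff 2 have "b = b'"
      by simp
    with 2 b b' show ?thesis
      by simp
  next
    case 3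
    define d where "d = \<psi> n m - \<phi> n m"
    have "d \<in> Hsp"
      by (simp add: d_def Hsp)
    have "Delta_ext q d = tmap \<psi> (Delta q n m) - tmap \<phi> (Delta q n m)"
      by (simp add: d_def Delta_ext_diff Hsp Delta)
    also have "\<dots> = tens (bas n 0) d + tens d (bas (n + int m) 0)"
      unfolding d_def using 3 lower by (intro tmap_Delta_diff) (simp_all add: deg_0)
    finally have "Delta_ext q d = tens (bas n 0) d + tens d (bas (n + int m) 0)" .
    moreover have "d (n + int m, 0) = 0"
      using coeff by (simp add: d_def)
    ultimately have "d = 0"
      using \<open>d \<in> Hsp\<close> 3 by (intro skew_primitive_eq_0)
    then show ?thesis
      by (simp add: d_def)
  qed
qed

lemma Aut_star_subset_PhiMap_image:
  assumes "\<psi> \<in> Aut_star q"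
  shows "\<psi> \<in> PhiMap q ` G_inf"
proof -
  define \<beta> where "\<beta> = (\<lambda>j. recover_beta q \<psi> j j)"
  have "\<beta> \<in> G_inf"
    by (simp add: G_inf_def \<beta>_def)
  have chainR_\<beta>: "chainR q \<beta> k = chainR q (recover_beta q \<psi> k) k" for k
    by (rule chainR_cong) (simp add: \<beta>_def recover_beta_stable[of _ k])
  have coeff: "\<psi> n m (n + int m, 0) = PhiMap q \<beta> n m (n + int m, 0)" for n m
  proof (cases m)
    case 0
    then show ?thesis
      using assms by (simp add: PhiMap_0 Aut_star_def)
  next
    case (Suc k)
    have "PhiMap q \<beta> n (Suc k) (n + int (Suc k), 0) = \<psi> n (Suc k) (n + int (Suc k), 0)"
      unfolding PhiMap_coeff_x_power chainR_\<beta> by (simp add: \<beta>_def)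
    with Suc show ?thesis
      by simp
  qed
  have "\<psi> n m = PhiMap q \<beta> n m" for n m
  proof (induction m arbitrary: n rule: less_induct)
    case (less m)
    show ?case
      by (rule Aut_star_eq_by_lower_degrees[OF assms PhiMap_in_Aut_star less coeff])
  qed
  with \<open>\<beta> \<in> G_inf\<close> show ?thesis
    by (auto simp: fun_eq_iff)
qed

theorem bij_betw_PhiMap: "bij_betw (PhiMap q) G_inf (Aut_star q)"
proof (rule bij_betw_imageI[OF inj_on_PhiMap])
  show "PhiMap q ` G_inf = Aut_star q"
    using PhiMap_in_Aut_star Aut_star_subset_PhiMap_image by blast
qed

end

theorem theorem3p13:
  fixes q :: "'k::field"
  assumes "q \<noteq> 0"
    and "\<forall>n::nat. n > 0 \<longrightarrow> q ^ n \<noteq> 1"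
  shows "bij_betw (PhiMap q) G_inf (Aut_star q)"
proof -
  interpret qint_nonzero q
    using assms(2) by (rule qint_nonzero_if_not_root_of_unity)
  show ?thesis
    by (rule bij_betw_PhiMap)
qed

end
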